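(* Let $(\mathcal{A},\varphi)$ be a tracial noncommutative probability space. Let $T_1=(V_1,E_1,\gamma_1)$ and $T_2=(V_2,E_2,\gamma_2)$ be test graphs in $\mathcal{A}$ with $T_2$ two-edge-connected. Let $T_1\sharp T_2$ be the test graph obtained from disjoint copies of $T_1$ and $T_2$ by identifying an arbitrary vertex $v_1$ of $T_1$ with an arbitrary vertex $v_2$ of $T_2$. Then $\tau_\varphi[T_1\sharp T_2]=\tau_\varphi[T_1]\,\tau_\varphi[T_2]$; in particular this is independent of the choice of $v_1$ and $v_2$.
   Context: $(\mathcal{A},\varphi)$: unital complex algebra with unital tracial linear functional; free cumulants $\kappa_n$ determined by $\varphi(a_1\cdots a_n)=\sum_{\pi\in NC(n)}\prod_{B\in\pi}\kappa_{|B|}[(a_i)_{i\in B}]$. A test graph in $\mathcal{A}$ is a finite connected directed multigraph (loops, parallel edges allowed) with edge labels in $\mathcal{A}$; $T^\pi$ identifies the vertices in each block of a partition $\pi$ of the vertex set. A cactus is a connected multigraph in which every edge lies in exactly one simple cycle (loops, pairs of parallel edges count as cycles); these are its pads; an oriented cactus is one whose pads are directed cycles. $\tau^0_\varphi[T]=\prod_{C\in\mathrm{Pads}(T)}\kappa_{n_C}[\gamma(e_1),\dots,\gamma(e_{n_C})]$ if $T$ is an oriented cactus (edges of $C$ listed with $\mathrm{src}(e_i)=\mathrm{tgt}(e_{i+1})$, indices mod $n_C$), and $0$ otherwise; $\tau_\varphi[T]=\sum_{\pi}\tau^0_\varphi[T^\pi]$ over all partitions of the vertex set. A connected multigraph is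 two-edge-connected if it has no cut-edge (no single edge whose deletion disconnects it). *)

theory Defs
  imports Complex_Main "HOL-Library.Disjoint_Sets"
begin

definition complex_algebra :: "(complex \<Rightarrow> 'a::ring_1 \<Rightarrow> 'a) \<Rightarrow> bool" where
  "complex_algebra sc \<longleftrightarrow>
     (\<forall>a. sc 1 a = a) \<and>
     (\<forall>c d a. sc c (sc d a) = sc (c * d) a) \<and>
     (\<forall>c d a. sc (c + d) a = sc c a + sc d a) \<and>
     (\<forall>c a b. sc c (a + b) = sc c a + sc c b) \<and>
     (\<forall>c a b. sc c (a * b) = sc c a * b) \<and>
     (\<forall>c a b. sc c (a * b) = a * sc c b)"

definition unital_tracial_functional ::
    "(complex \<Rightarrow> 'a::ring_1 \<Rightarrow> 'a) \<Rightarrow> ('a \<Rightarrow> complex) \<Rightarrow> bool" where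
  "unital_tracial_functional sc \<phi> \<longleftrightarrow>
     (\<forall>a b. \<phi> (a + b) = \<phi> a + \<phi> b) \<and>
     (\<forall>c a. \<phi> (sc c a) = c * \<phi> a) \<and>
     \<phi> 1 = 1 \<and>
     (\<forall>a b. \<phi> (a * b) = \<phi> (b * a))"

definition noncrossing :: "nat set set \<Rightarrow> bool" where
  "noncrossing P \<longleftrightarrow>
     (\<forall>B1\<in>P. \<forall>B2\<in>P. B1 \<noteq> B2 \<longrightarrow>
        \<not> (\<exists>a b c d. a < b \<and> b < c \<and> c < d \<and> a \<in> B1 \<and> c \<in> B1 \<and> b \<in> B2 \<and> d \<in> B2))"

definition NC :: "nat \<Rightarrow> nat set set set" where
  "NC n = {P. partition_on {0..<n} P \<and> noncrossing P}"

text \<open>kappa (as : 'a list) stands for the free cumulant of order length as.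
The cumulants are determined by the moment-cumulant formula; the restriction
of the argument list to a block B (in increasing order of indices) is nths as B.\<close>
definition free_cumulants :: "('a::ring_1 \<Rightarrow> complex) \<Rightarrow> ('a list \<Rightarrow> complex) \<Rightarrow> bool" where
  "free_cumulants \<phi> \<kappa> \<longleftrightarrow>
     (\<forall>as. as \<noteq> [] \<longrightarrow>
        \<phi> (prod_list as) = (\<Sum>P\<in>NC (length as). \<Prod>B\<in>P. \<kappa> (nths as B)))"

record ('v, 'e, 'a) tgraph =
  tverts :: "'v set"
  tedges :: "'e set"
  tsrc :: "'e \<Rightarrow> 'v"
  ttgt :: "'e \<Rightarrow> 'v"
  tlab :: "'e \<Rightarrow> 'a"

definition wf_graph :: "('v, 'e, 'a) tgraph \<Rightarrow> bool" where
  "wf_graph T \<longleftrightarrow> finite (tverts T) \<and> finite (tedges T) \<and>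
     (\<forall>e\<in>tedges T. tsrc T e \<in> tverts T \<and> ttgt T e \<in> tverts T)"

definition adj_rel :: "('v, 'e, 'a) tgraph \<Rightarrow> ('v \<times> 'v) set" where
  "adj_rel T = {(u, v). \<exists>e\<in>tedges T.
      (tsrc T e = u \<and> ttgt T e = v) \<or> (tsrc T e = v \<and> ttgt T e = u)}"

definition connected_graph :: "('v, 'e, 'a) tgraph \<Rightarrow> bool" where
  "connected_graph T \<longleftrightarrow> tverts T \<noteq> {} \<and>
     (\<forall>u\<in>tverts T. \<forall>v\<in>tverts T. (u, v) \<in> (adj_rel T)\<^sup>*)"

definition test_graph :: "('v, 'e, 'a) tgraph \<Rightarrow> bool" where
  "test_graph T \<longleftrightarrow> wf_graph T \<and> connected_graph T"

definition delete_edge :: "('v, 'e, 'a) tgraph \<Rightarrow> 'e \<Rightarrow> ('v, 'e, 'a) tgraph" where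
  "delete_edge T e = T\<lparr>tedges := tedges T - {e}\<rparr>"

definition two_edge_connected :: "('v, 'e, 'a) tgraph \<Rightarrow> bool" where
  "two_edge_connected T \<longleftrightarrow> connected_graph T \<and>
     (\<forall>e\<in>tedges T. connected_graph (delete_edge T e))"

text \<open>For n = 1 this is a loop, for n = 2 a pair of parallel edges.\<close>
definition simple_cycle :: "('v, 'e, 'a) tgraph \<Rightarrow> 'e set \<Rightarrow> bool" where
  "simple_cycle T C \<longleftrightarrow> C \<subseteq> tedges T \<and>
     (\<exists>es vs. es \<noteq> [] \<and> distinct es \<and> set es = C \<and>
        length vs = length es \<and> distinct vs \<and>
        (\<forall>i<length es. {tsrc T (es ! i), ttgt T (es ! i)} =
                        {vs ! i, vs ! (Suc i mod length es)}))"

definition cactus :: "('v, 'e, 'a) tgraph \<Rightarrow> bool" where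
  "cactus T \<longleftrightarrow> connected_graph T \<and>
     (\<forall>e\<in>tedges T. \<exists>!C. simple_cycle T C \<and> e \<in> C)"

definition pads :: "('v, 'e, 'a) tgraph \<Rightarrow> 'e set set" where
  "pads T = {C. simple_cycle T C}"

definition directed_listing :: "('v, 'e, 'a) tgraph \<Rightarrow> 'e set \<Rightarrow> 'e list \<Rightarrow> bool" where
  "directed_listing T C es \<longleftrightarrow> es \<noteq> [] \<and> distinct es \<and> set es = C \<and>
     (\<forall>i<length es. tsrc T (es ! i) = ttgt T (es ! (Suc i mod length es)))"

definition oriented_cactus :: "('v, 'e, 'a) tgraph \<Rightarrow> bool" where
  "oriented_cactus T \<longleftrightarrow> cactus T \<and> (\<forall>C\<in>pads T. \<exists>es. directed_listing T C es)"

definition tau0 :: "('a list \<Rightarrow> complex) \<Rightarrow> ('v, 'e, 'a) tgraph \<Rightarrow> complex" where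
  "tau0 \<kappa> T = (if oriented_cactus T
      then (\<Prod>C\<in>pads T. \<kappa> (map (tlab T) (SOME es. directed_listing T C es)))
      else 0)"

definition block_of :: "'v set set \<Rightarrow> 'v \<Rightarrow> 'v set" where
  "block_of P v = (THE B. B \<in> P \<and> v \<in> B)"

definition quot_graph :: "('v, 'e, 'a) tgraph \<Rightarrow> 'v set set \<Rightarrow> ('v set, 'e, 'a) tgraph" where
  "quot_graph T P = \<lparr>tverts = P, tedges = tedges T,
      tsrc = (\<lambda>e. block_of P (tsrc T e)), ttgt = (\<lambda>e. block_of P (ttgt T e)),
      tlab = tlab T\<rparr>"

definition tau :: "('a list \<Rightarrow> complex) \<Rightarrow> ('v, 'e, 'a) tgraph \<Rightarrow> complex" where
  "tau \<kappa> T = (\<Sum>P\<in>{P. partition_on (tverts T) P}. tau0 \<kappa> (quot_graph T P))"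

definition glue_vertex :: "'v1 \<Rightarrow> 'v2 \<Rightarrow> 'v2 \<Rightarrow> 'v1 + 'v2" where
  "glue_vertex v1 v2 w = (if w = v2 then Inl v1 else Inr w)"

definition glue ::
    "('v1, 'e1, 'a) tgraph \<Rightarrow> 'v1 \<Rightarrow> ('v2, 'e2, 'a) tgraph \<Rightarrow> 'v2 \<Rightarrow>
     ('v1 + 'v2, 'e1 + 'e2, 'a) tgraph" where
  "glue T1 v1 T2 v2 = \<lparr>
      tverts = Inl ` tverts T1 \<union> Inr ` (tverts T2 - {v2}),
      tedges = Inl ` tedges T1 \<union> Inr ` tedges T2,
      tsrc = case_sum (\<lambda>e. Inl (tsrc T1 e)) (\<lambda>e. glue_vertex v1 v2 (tsrc T2 e)),
      ttgt = case_sum (\<lambda>e. Inl (ttgt T1 e)) (\<lambda>e. glue_vertex v1 v2 (ttgt T2 e)),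
      tlab = case_sum (tlab T1) (tlab T2)\<rparr>"

end

theory Submission
  imports Defs
begin

text \<open>
  Expand tau of the glued graph as a sum over partitions P of its vertex set. If a block of P
  joins a vertex of T1 to a vertex of T2 other than the glued one, the quotient has two
  distinct vertices shared by the image of T1 and the image of the two-edge-connected T2; an
  edge of T2 then lies both on a simple cycle leaving through T1 and on one inside T2, so the
  quotient is no cactus and contributes 0. Every other P is glued from a partition of T1 and a
  partition of T2, bijectively; its quotient is the quotients of T1 and T2 glued at one vertex,
  every simple cycle stays on one side, and tau0 factorises, which turns the sum into the
  product. Identifying the quotients with the quotients of T1 and T2 needs tau0 to be
  independent of the chosen directed listing of each pad, i.e. cyclic invariance of the free
  cumulants, which follows from traciality by induction on the moment-cumulant formula.
\<close>

section \<open>Cyclic invariance of free cumulants\<close>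

definition succ_mod :: "nat \<Rightarrow> nat \<Rightarrow> nat" where
  "succ_mod n i = Suc i mod n"

lemma succ_mod_less: "0 < n \<Longrightarrow> succ_mod n i < n"
  by (simp add: succ_mod_def)

lemma succ_mod_eq: "i < n \<Longrightarrow> succ_mod n i = (if Suc i = n then 0 else Suc i)"
  by (simp add: succ_mod_def)

lemma inj_on_succ_mod: "inj_on (succ_mod n) {0..<n}"
  by (rule inj_onI) (auto simp: succ_mod_eq split: if_splits)

lemma succ_mod_image: "succ_mod n ` {0..<n} = {0..<n}"
proof (cases "n = 0")
  case False
  then show ?thesis
    by (intro endo_inj_surj) (auto simp: succ_mod_less inj_on_succ_mod)
qed simp

lemma NC_subset_Pow: "NC n \<subseteq> Pow (Pow {0..<n})"
  by (auto simp: NC_def partition_on_def)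

lemma finite_NC: "finite (NC n)"
  by (rule finite_subset[OF _ finitely_many_partition_on[of "{0..<n}"]]) (auto simp: NC_def)

lemma NC_top: "0 < n \<Longrightarrow> {{0..<n}} \<in> NC n"
  by (auto simp: NC_def partition_on_space noncrossing_def)

lemma partition_on_whole_block:
  assumes "partition_on A P" "A \<in> P"
  shows "P = {A}"
proof -
  have "B = A" if "B \<in> P" for B
  proof (rule ccontr)
    assume "B \<noteq> A"
    then have "disjnt B A" using assms that unfolding partition_on_def pairwise_def by blast
    moreover have "B \<noteq> {}" "B \<subseteq> A" using assms that partition_onD3 partition_onD1 by blast+
    ultimately show False by (auto simp: disjnt_def)
  qed
  then show ?thesis using assms(2) by blast
qed

text \<open>A crossing of the rotated blocks is either a crossing of the original blocks or,
  when its first point is the image 0 of n - 1, a crossing with the roles of the two blocks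
  exchanged.\<close>
lemma noncrossing_succ_mod:
  assumes P: "partition_on {0..<n} P" and nc: "noncrossing P"
  shows "noncrossing ((`) (succ_mod n) ` P)"
  unfolding noncrossing_def
proof (intro ballI impI notI)
  fix B1' B2' assume "B1' \<in> (`) (succ_mod n) ` P" "B2' \<in> (`) (succ_mod n) ` P" "B1' \<noteq> B2'"
    and "\<exists>a b c d. a < b \<and> b < c \<and> c < d \<and> a \<in> B1' \<and> c \<in> B1' \<and> b \<in> B2' \<and> d \<in> B2'"
  then obtain B1 B2 a b c d where B: "B1 \<in> P" "B2 \<in> P" "B1 \<noteq> B2"
    and pts: "a \<in> B1" "c \<in> B1" "b \<in> B2" "d \<in> B2"
    and order: "succ_mod n a < succ_mod n b" "succ_mod n b < succ_mod n c"
      "succ_mod n c < succ_mod n d"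
    by blast
  have lt: "a < n" "b < n" "c < n" "d < n"
    using pts B P partition_onD1 by fastforce+
  have b: "succ_mod n b = Suc b" and c: "succ_mod n c = Suc c" and d: "succ_mod n d = Suc d"
    using order lt by (auto simp: succ_mod_eq split: if_splits)
  show False
  proof (cases "succ_mod n a = 0")
    case True
    then have "b < c \<and> c < d \<and> d < a" using lt order b c d
      by (auto simp: succ_mod_eq split: if_splits)
    then show False using nc B pts unfolding noncrossing_def by metis
  next
    case False
    then have "a < b \<and> b < c \<and> c < d" using lt order b c d
      by (auto simp: succ_mod_eq split: if_splits)
    then show False using nc B pts unfolding noncrossing_def by metis
  qed
qed

lemma partition_on_succ_mod:
  assumes P: "partition_on {0..<n} P"
  shows "partition_on {0..<n} ((`) (succ_mod n) ` P)"
proof -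
  have "partition_on (succ_mod n ` {0..<n}) ((`) (succ_mod n) ` P - {{}})"
    by (rule partition_on_inj_image[OF P inj_on_succ_mod])
  moreover have "(`) (succ_mod n) ` P - {{}} = (`) (succ_mod n) ` P"
    using partition_onD3[OF P] by auto
  ultimately show ?thesis by (simp add: succ_mod_image)
qed

lemma inj_on_image_succ_mod_NC: "inj_on ((`) ((`) (succ_mod n))) (NC n)"
  by (rule inj_on_subset[OF inj_on_image_Pow[OF inj_on_image_Pow[OF inj_on_succ_mod]]
        NC_subset_Pow])

lemma NC_succ_mod_image: "(`) ((`) (succ_mod n)) ` NC n = NC n"
proof (rule endo_inj_surj[OF finite_NC])
  show "(`) ((`) (succ_mod n)) ` NC n \<subseteq> NC n"
    using partition_on_succ_mod noncrossing_succ_mod by (auto simp: NC_def)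
qed (rule inj_on_image_succ_mod_NC)

lemma sum_NC_reindex_succ_mod:
  "(\<Sum>P\<in>NC n. \<Prod>B\<in>P. f B) = (\<Sum>P\<in>NC n. \<Prod>B\<in>P. f (succ_mod n ` B))"
proof -
  have "(\<Sum>P\<in>NC n. \<Prod>B\<in>P. f B) = (\<Sum>P\<in>NC n. \<Prod>B\<in>(`) (succ_mod n) ` P. f B)"
    by (subst (1) NC_succ_mod_image[symmetric]) (simp add: sum.reindex[OF inj_on_image_succ_mod_NC])
  also have "\<dots> = (\<Sum>P\<in>NC n. \<Prod>B\<in>P. f (succ_mod n ` B))"
  proof (rule sum.cong[OF refl])
    fix P assume "P \<in> NC n"
    then have "inj_on ((`) (succ_mod n)) P"
      using inj_on_subset[OF inj_on_image_Pow[OF inj_on_succ_mod]] NC_subset_Pow by blast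
    then show "(\<Prod>B\<in>(`) (succ_mod n) ` P. f B) = (\<Prod>B\<in>P. f (succ_mod n ` B))"
      by (simp add: prod.reindex)
  qed
  finally show ?thesis .
qed

lemma nths_restrict: "nths xs A = nths xs (A \<inter> {..<length xs})"
  unfolding nths_def
  by (rule arg_cong[where f="map fst"], rule filter_cong) (auto simp: set_zip)

lemma nths_succ_mod_Cons:
  assumes "B \<subseteq> {0..<Suc (length xs)}"
  shows "nths (x # xs) (succ_mod (Suc (length xs)) ` B) =
           (if length xs \<in> B then [x] else []) @ nths xs B"
proof -
  let ?m = "length xs"
  have "i \<le> ?m" if "i \<in> B" for i using assms that by auto
  then have zero: "0 \<in> succ_mod (Suc ?m) ` B \<longleftrightarrow> ?m \<in> B"
    and succ: "{j. Suc j \<in> succ_mod (Suc ?m) ` B} = B \<inter> {..<?m}"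
    by (force simp: succ_mod_eq image_iff split: if_splits)+
  show ?thesis
    unfolding nths_Cons zero succ by (metis nths_restrict)
qed

lemma nths_rotate1_cases:
  assumes "B \<subseteq> {0..<length as}"
  shows "nths (rotate1 as) B = nths as (succ_mod (length as) ` B) \<or>
         nths (rotate1 as) B = rotate1 (nths as (succ_mod (length as) ` B))"
proof (cases as)
  case (Cons x xs)
  then show ?thesis
    using nths_succ_mod_Cons[of B xs x] assms by (simp add: nths_append)
qed simp

lemma length_nths_succ_mod_image:
  assumes "B \<subseteq> {0..<length as}"
  shows "length (nths as (succ_mod (length as) ` B)) = card B"
proof -
  have "succ_mod (length as) i < length as" if "i \<in> B" for i
    using assms that by (intro succ_mod_less) auto
  then have "{i. i < length as \<and> i \<in> succ_mod (length as) ` B} = succ_mod (length as) ` B"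
    by auto
  then show ?thesis
    using card_image[OF inj_on_subset[OF inj_on_succ_mod assms]] by (simp add: length_nths)
qed

lemma NC_block_card_less:
  assumes "P \<in> NC n" "P \<noteq> {{0..<n}}" "B \<in> P"
  shows "card B < n"
proof -
  have "B \<subseteq> {0..<n}" using assms NC_subset_Pow by blast
  moreover have "B \<noteq> {0..<n}" using assms partition_on_whole_block by (auto simp: NC_def)
  ultimately show ?thesis by (metis card_atLeastLessThan card_seteq diff_zero finite_atLeastLessThan
        not_le_imp_less)
qed

text \<open>The moment-cumulant formula for the rotated word, reindexed by the rotation of
  NC(n), differs from the one for the word itself only in the top partition, because every
  other block is shorter than the word and is itself rotated by at most one step.\<close>
lemma free_cumulant_rotate1:
  assumes tr: "unital_tracial_functional sc \<phi>" and fc: "free_cumulants \<phi> \<kappa>"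
    and "as \<noteq> []"
  shows "\<kappa> (rotate1 as) = \<kappa> as"
  using \<open>as \<noteq> []\<close>
proof (induction "length as" arbitrary: as rule: less_induct)
  case less
  define n where "n = length as"
  have n: "0 < n" "length (rotate1 as) = n" using less.prems n_def by auto
  let ?top = "{{0..<n}}"
  let ?F = "\<lambda>P. \<Prod>B\<in>P. \<kappa> (nths (rotate1 as) B)"
  let ?G = "\<lambda>P. \<Prod>B\<in>P. \<kappa> (nths as (succ_mod n ` B))"
  have same: "?F P = ?G P" if P: "P \<in> NC n - {?top}" for P
  proof (rule prod.cong[OF refl])
    fix B assume B: "B \<in> P"
    have "B \<subseteq> {0..<n}" using P B NC_subset_Pow by blast
    moreover have "card B < n" using P B NC_block_card_less by blast
    ultimately show "\<kappa> (nths (rotate1 as) B) = \<kappa> (nths as (succ_mod n ` B))"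
      using nths_rotate1_cases[of B as] length_nths_succ_mod_image[of B as]
        less.hyps[of "nths as (succ_mod n ` B)"] n_def
      by fastforce
  qed
  have "\<phi> (prod_list (rotate1 as)) = \<phi> (prod_list as)"
    using tr less.prems by (cases as) (simp_all add: unital_tracial_functional_def)
  moreover have "\<phi> (prod_list as) = (\<Sum>P\<in>NC n. \<Prod>B\<in>P. \<kappa> (nths as B))"
    using fc less.prems n_def unfolding free_cumulants_def by blast
  moreover note sum_NC_reindex_succ_mod[of "\<lambda>B. \<kappa> (nths as B)" n]
  ultimately have "?F ?top + (\<Sum>P\<in>NC n - {?top}. ?F P) = ?G ?top + (\<Sum>P\<in>NC n - {?top}. ?G P)"
    using fc less.prems n sum.remove[OF finite_NC NC_top[OF n(1)]] unfolding free_cumulants_def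
    by (metis rotate1_is_Nil_conv)
  moreover have "?F ?top = \<kappa> (rotate1 as)" "?G ?top = \<kappa> as"
    using n n_def by (simp_all add: nths_all succ_mod_image)
  moreover have "(\<Sum>P\<in>NC n - {?top}. ?F P) = (\<Sum>P\<in>NC n - {?top}. ?G P)"
    using same by (rule sum.cong[OF refl])
  ultimately show ?case by simp
qed

lemma free_cumulant_rotate:
  assumes "unital_tracial_functional sc \<phi>" "free_cumulants \<phi> \<kappa>" "as \<noteq> []"
  shows "\<kappa> (rotate k as) = \<kappa> as"
  using assms(3) by (induction k) (auto simp: free_cumulant_rotate1[OF assms(1,2)])

section \<open>Directed listings of a simple cycle\<close>

lemma Suc_mod_pred_mod: "i < (n::nat) \<Longrightarrow> Suc ((i + n - 1) mod n) mod n = i"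
  by (cases i) (simp_all add: mod_Suc_eq)

lemma pred_mod_Suc_mod: "i < (n::nat) \<Longrightarrow> (Suc i mod n + n - 1) mod n = i"
  by (cases "Suc i = n") simp_all

lemma simple_cycle_edge_not_loop:
  assumes "simple_cycle T C" "2 \<le> card C" "e \<in> C"
  shows "tsrc T e \<noteq> ttgt T e"
proof
  assume loop: "tsrc T e = ttgt T e"
  obtain es vs where es: "distinct es" "set es = C" "length vs = length es" "distinct vs"
    and ends: "\<forall>i<length es. {tsrc T (es ! i), ttgt T (es ! i)} = {vs ! i, vs ! (Suc i mod length es)}"
    using assms(1) unfolding simple_cycle_def by blast
  obtain i where i: "i < length es" "e = es ! i" using es assms(3) by (metis in_set_conv_nth)
  have "2 \<le> length es" using assms(2) es distinct_card by metis
  then have "Suc i mod length es \<noteq> i" using i(1) by (cases "Suc i = length es") auto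
  moreover have "vs ! i = vs ! (Suc i mod length es)"
    using ends i loop by (metis doubleton_eq_iff)
  moreover have "Suc i mod length es < length vs"
    using es(3) i(1) by (metis length_greater_0_conv list.size(3) mod_less_divisor not_less0)
  ultimately show False
    using es i by (simp add: nth_eq_iff_index_eq)
qed

text \<open>The edges at the vertex v_j of the cycle are e_j and e_(j-1).\<close>
lemma simple_cycle_incident_edges:
  assumes "simple_cycle T C"
  obtains e1 e2 where "{e\<in>C. x = tsrc T e \<or> x = ttgt T e} \<subseteq> {e1, e2}"
proof -
  obtain es vs where es: "distinct es" "set es = C" "length vs = length es" "distinct vs"
    and ends: "\<forall>i<length es. {tsrc T (es ! i), ttgt T (es ! i)} = {vs ! i, vs ! (Suc i mod length es)}"
    using assms unfolding simple_cycle_def by blast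
  let ?n = "length es"
  have incident: "x = vs ! i \<or> x = vs ! (Suc i mod ?n)" "Suc i mod ?n < ?n"
    if "e \<in> C" "x = tsrc T e \<or> x = ttgt T e" "i < ?n" "e = es ! i" for e i
    using that ends by (auto intro: mod_less_divisor)
  show ?thesis
  proof (cases "x \<in> set vs")
    case False
    have "{e\<in>C. x = tsrc T e \<or> x = ttgt T e} = {}"
    proof (intro equals0I)
      fix e assume e: "e \<in> {e\<in>C. x = tsrc T e \<or> x = ttgt T e}"
      then obtain i where "i < ?n" "e = es ! i" using es(2) by (auto simp: in_set_conv_nth)
      then have "x = vs ! i \<or> x = vs ! (Suc i mod ?n)" "i < length vs" "Suc i mod ?n < length vs"
        using incident[of e i] e es(3) by auto
      then show False using False nth_mem by metis
    qed
    then show ?thesis using that by blast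
  next
    case True
    then obtain j where j: "j < ?n" "x = vs ! j" using es by (metis in_set_conv_nth)
    have "e \<in> {es ! j, es ! ((j + ?n - 1) mod ?n)}"
      if e: "e \<in> C" "x = tsrc T e \<or> x = ttgt T e" for e
    proof -
      obtain i where i: "i < ?n" "e = es ! i" using e(1) es(2) by (auto simp: in_set_conv_nth)
      have "vs ! j = vs ! i \<or> vs ! j = vs ! (Suc i mod ?n)"
        using incident(1)[OF e i] j by simp
      moreover have "j < length vs" "i < length vs" "Suc i mod ?n < length vs"
        using i(1) incident(2)[OF e i] j es(3) by auto
      ultimately have "j = i \<or> (j + ?n - 1) mod ?n = i"
        using pred_mod_Suc_mod[OF i(1)] by (auto simp: nth_eq_iff_index_eq[OF es(4)])
      then show ?thesis using i by auto
    qed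
    then show ?thesis using that by blast
  qed
qed

text \<open>Two edges of a directed cycle with a common target x would be the only two edges at
  x, so the edge leaving x, which is one of them, would be a loop.\<close>
lemma directed_listing_inj_on_ttgt:
  assumes "simple_cycle T C" "directed_listing T C es" "2 \<le> card C"
  shows "inj_on (ttgt T) C"
proof (rule inj_onI, rule ccontr)
  fix e f assume e: "e \<in> C" and f: "f \<in> C" and eq: "ttgt T e = ttgt T f" and "e \<noteq> f"
  have es: "distinct es" "set es = C"
    and lst: "\<forall>i<length es. tsrc T (es ! i) = ttgt T (es ! (Suc i mod length es))"
    using assms(2) unfolding directed_listing_def by auto
  let ?n = "length es"
  obtain e1 e2 where inc: "{g\<in>C. ttgt T e = tsrc T g \<or> ttgt T e = ttgt T g} \<subseteq> {e1, e2}"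
    using simple_cycle_incident_edges[OF assms(1)] by blast
  then have ef: "{e1, e2} = {e, f}" using e f eq \<open>e \<noteq> f\<close> by blast
  obtain i where i: "i < ?n" "e = es ! i" using e es by (metis in_set_conv_nth)
  define k where "k = (i + ?n - 1) mod ?n"
  have "k < ?n" unfolding k_def by (rule mod_less_divisor) (use i(1) in linarith)
  then have out: "es ! k \<in> C" "tsrc T (es ! k) = ttgt T e"
    using lst i es Suc_mod_pred_mod[OF i(1)] by (auto simp: k_def)
  then have "es ! k \<in> {e, f}" using inc ef by auto
  then show False
    using out eq simple_cycle_edge_not_loop[OF assms(1,3) out(1)] by auto
qed

lemma directed_listing_rotate:
  assumes sc: "simple_cycle T C" and l1: "directed_listing T C es"
    and l2: "directed_listing T C es'"
  obtains k where "es' = rotate k es"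
proof -
  have es: "es \<noteq> []" "distinct es" "set es = C"
    and lst: "\<forall>i<length es. tsrc T (es ! i) = ttgt T (es ! (Suc i mod length es))"
    using l1 unfolding directed_listing_def by auto
  have es': "distinct es'" "set es' = C"
    and lst': "\<forall>i<length es'. tsrc T (es' ! i) = ttgt T (es' ! (Suc i mod length es'))"
    using l2 unfolding directed_listing_def by auto
  define n where "n = length es"
  have len: "length es' = n" using es es' n_def by (metis distinct_card)
  have n: "0 < n" using es n_def by auto
  obtain k where k: "k < n" "es' ! 0 = es ! k"
    using es es' n len n_def by (metis in_set_conv_nth nth_mem)
  have "es' ! i = es ! ((k + i) mod n)" if "i < n" for i
    using that
  proof (induction i)
    case (Suc i)
    have inj: "inj_on (ttgt T) C"
      using directed_listing_inj_on_ttgt[OF sc l1] Suc.prems es n_def distinct_card by fastforce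
    have "ttgt T (es' ! Suc i) = tsrc T (es' ! i)" using lst' Suc.prems len by simp
    also have "\<dots> = tsrc T (es ! ((k + i) mod n))" using Suc by simp
    also have "\<dots> = ttgt T (es ! ((k + Suc i) mod n))" using lst n n_def by (simp add: mod_Suc_eq)
    finally show ?case
      using inj_onD[OF inj] Suc.prems len es es' n n_def by (metis Suc_lessD mod_less_divisor nth_mem)
  qed (use k in simp)
  then have "es' = rotate k es"
    by (intro nth_equalityI) (auto simp: len n_def nth_rotate)
  then show ?thesis using that by blast
qed

lemma free_cumulant_directed_listing_eq:
  assumes "unital_tracial_functional sc \<phi>" "free_cumulants \<phi> \<kappa>"
    and "simple_cycle T C" "directed_listing T C es" "directed_listing T C es'"
  shows "\<kappa> (map (tlab T) es') = \<kappa> (map (tlab T) es)"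
proof -
  obtain k where "es' = rotate k es" using directed_listing_rotate[OF assms(3-5)] .
  moreover have "map (tlab T) es \<noteq> []" using assms(4) by (auto simp: directed_listing_def)
  ultimately show ?thesis
    using free_cumulant_rotate[OF assms(1,2)] by (simp add: rotate_map[symmetric])
qed

section \<open>Isomorphisms of test graphs\<close>

definition graph_iso ::
    "('v, 'e, 'a) tgraph \<Rightarrow> ('w, 'f, 'a) tgraph \<Rightarrow> ('v \<Rightarrow> 'w) \<Rightarrow> ('e \<Rightarrow> 'f) \<Rightarrow> bool" where
  "graph_iso H H' f g \<longleftrightarrow>
     bij_betw f (tverts H) (tverts H') \<and> bij_betw g (tedges H) (tedges H') \<and>
     (\<forall>e\<in>tedges H. tsrc H' (g e) = f (tsrc H e) \<and> ttgt H' (g e) = f (ttgt H e) \<and>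
        tlab H' (g e) = tlab H e) \<and>
     (\<forall>e\<in>tedges H. tsrc H e \<in> tverts H \<and> ttgt H e \<in> tverts H)"

lemma graph_iso_inv:
  assumes "graph_iso H H' f g"
  shows "graph_iso H' H (inv_into (tverts H) f) (inv_into (tedges H) g)"
proof -
  have bf: "bij_betw f (tverts H) (tverts H')" and bg: "bij_betw g (tedges H) (tedges H')"
    and c: "\<forall>e\<in>tedges H. tsrc H' (g e) = f (tsrc H e) \<and> ttgt H' (g e) = f (ttgt H e) \<and>
              tlab H' (g e) = tlab H e"
    and w: "\<forall>e\<in>tedges H. tsrc H e \<in> tverts H \<and> ttgt H e \<in> tverts H"
    using assms unfolding graph_iso_def by auto
  let ?f = "inv_into (tverts H) f" and ?g = "inv_into (tedges H) g"
  have "tsrc H (?g e') = ?f (tsrc H' e') \<and> ttgt H (?g e') = ?f (ttgt H' e') \<and>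
      tlab H (?g e') = tlab H' e' \<and> tsrc H' e' \<in> tverts H' \<and> ttgt H' e' \<in> tverts H'"
    if e': "e' \<in> tedges H'" for e'
  proof -
    obtain e where e: "e \<in> tedges H" "e' = g e" using e' bg by (auto simp: bij_betw_def)
    then have "?g e' = e" using bg by (simp add: bij_betw_def)
    moreover have "?f (f (tsrc H e)) = tsrc H e" "?f (f (ttgt H e)) = ttgt H e"
      using w e bf by (auto simp: bij_betw_def)
    ultimately show ?thesis using c w e bf by (auto simp: bij_betw_def)
  qed
  then show ?thesis
    unfolding graph_iso_def using bij_betw_inv_into[OF bf] bij_betw_inv_into[OF bg] by blast
qed

lemma simple_cycle_graph_iso:
  assumes iso: "graph_iso H H' f g" and sc: "simple_cycle H C"
  shows "simple_cycle H' (g ` C)"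
proof -
  have bf: "bij_betw f (tverts H) (tverts H')" and bg: "bij_betw g (tedges H) (tedges H')"
    and c: "\<forall>e\<in>tedges H. tsrc H' (g e) = f (tsrc H e) \<and> ttgt H' (g e) = f (ttgt H e)"
    and w: "\<forall>e\<in>tedges H. tsrc H e \<in> tverts H \<and> ttgt H e \<in> tverts H"
    using iso unfolding graph_iso_def by auto
  obtain es vs where C: "C \<subseteq> tedges H" "es \<noteq> []" "distinct es" "set es = C"
    "length vs = length es" "distinct vs"
    and ends: "\<forall>i<length es. {tsrc H (es ! i), ttgt H (es ! i)} =
                               {vs ! i, vs ! (Suc i mod length es)}"
    using sc unfolding simple_cycle_def by blast
  have "set vs \<subseteq> tverts H"
  proof
    fix v assume "v \<in> set vs"
    then obtain i where i: "i < length vs" "v = vs ! i" by (metis in_set_conv_nth)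
    then have "v \<in> {tsrc H (es ! i), ttgt H (es ! i)}" "es ! i \<in> tedges H" using ends C by auto
    then show "v \<in> tverts H" using w by auto
  qed
  then have "distinct (map f vs)"
    using C bf by (auto simp: bij_betw_def distinct_map intro: inj_on_subset)
  moreover have "distinct (map g es)"
    using C bg by (auto simp: bij_betw_def distinct_map intro: inj_on_subset)
  moreover have "{tsrc H' (map g es ! i), ttgt H' (map g es ! i)} =
                 {map f vs ! i, map f vs ! (Suc i mod length (map g es))}"
    if i: "i < length (map g es)" for i
  proof -
    have "es ! i \<in> tedges H" "Suc i mod length es < length vs" using C i by auto
    then have "{tsrc H' (map g es ! i), ttgt H' (map g es ! i)} =
        f ` {tsrc H (es ! i), ttgt H (es ! i)}"
      using c i by auto
    also have "\<dots> = f ` {vs ! i, vs ! (Suc i mod length es)}" using ends i by simp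
    finally show ?thesis using i C by simp
  qed
  moreover have "g ` C \<subseteq> tedges H'" using C bg by (auto simp: bij_betw_def)
  ultimately show ?thesis unfolding simple_cycle_def
    using C by (intro conjI exI[of _ "map g es"] exI[of _ "map f vs"]) auto
qed

lemma directed_listing_graph_iso:
  assumes iso: "graph_iso H H' f g" and sub: "C \<subseteq> tedges H" and dl: "directed_listing H C es"
  shows "directed_listing H' (g ` C) (map g es)"
proof -
  have bg: "bij_betw g (tedges H) (tedges H')"
    and c: "\<forall>e\<in>tedges H. tsrc H' (g e) = f (tsrc H e) \<and> ttgt H' (g e) = f (ttgt H e)"
    using iso unfolding graph_iso_def by auto
  have es: "es \<noteq> []" "distinct es" "set es = C"
    and lst: "\<forall>i<length es. tsrc H (es ! i) = ttgt H (es ! (Suc i mod length es))"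
    using dl unfolding directed_listing_def by auto
  have "distinct (map g es)"
    using es sub bg by (auto simp: bij_betw_def distinct_map intro: inj_on_subset)
  moreover have "tsrc H' (map g es ! i) = ttgt H' (map g es ! (Suc i mod length (map g es)))"
    if i: "i < length (map g es)" for i
  proof -
    have "es ! i \<in> tedges H" "es ! (Suc i mod length es) \<in> tedges H" using es sub i by auto
    then show ?thesis using c lst i es by auto
  qed
  ultimately show ?thesis using es unfolding directed_listing_def by auto
qed

lemma connected_graph_iso:
  assumes iso: "graph_iso H H' f g" and con: "connected_graph H"
  shows "connected_graph H'"
proof -
  have bf: "bij_betw f (tverts H) (tverts H')" and bg: "bij_betw g (tedges H) (tedges H')"
    and c: "\<forall>e\<in>tedges H. tsrc H' (g e) = f (tsrc H e) \<and> ttgt H' (g e) = f (ttgt H e)"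
    using iso unfolding graph_iso_def by auto
  have "(f u, f v) \<in> (adj_rel H')\<^sup>*" if "(u, v) \<in> (adj_rel H)\<^sup>*" for u v
    using that
  proof (induction rule: rtrancl_induct)
    case (step y z)
    then obtain e where e: "e \<in> tedges H"
      "(tsrc H e = y \<and> ttgt H e = z) \<or> (tsrc H e = z \<and> ttgt H e = y)"
      unfolding adj_rel_def by auto
    then have "(f y, f z) \<in> adj_rel H'"
      using bg c unfolding adj_rel_def bij_betw_def by force
    then show ?case using step by auto
  qed simp
  moreover have "tverts H' = f ` tverts H" using bf by (simp add: bij_betw_def)
  ultimately show ?thesis
    using con unfolding connected_graph_def by auto
qed

lemma pads_graph_iso:
  assumes iso: "graph_iso H H' f g"
  shows "pads H' = (`) g ` pads H"
proof (intro set_eqI iffI)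
  fix C' assume "C' \<in> pads H'"
  then have sc: "simple_cycle H' C'" by (simp add: pads_def)
  have "simple_cycle H (inv_into (tedges H) g ` C')"
    by (rule simple_cycle_graph_iso[OF graph_iso_inv[OF iso] sc])
  moreover have "C' = g ` inv_into (tedges H) g ` C'"
    using iso sc by (simp add: graph_iso_def simple_cycle_def bij_betw_def image_inv_into_cancel)
  ultimately show "C' \<in> (`) g ` pads H" by (auto simp: pads_def)
next
  fix C' assume "C' \<in> (`) g ` pads H"
  then show "C' \<in> pads H'" using simple_cycle_graph_iso[OF iso] by (auto simp: pads_def)
qed

lemma cactus_graph_iso:
  assumes iso: "graph_iso H H' f g" and ca: "cactus H"
  shows "cactus H'"
  unfolding cactus_def
proof (intro conjI ballI)
  show "connected_graph H'" using connected_graph_iso[OF iso] ca by (simp add: cactus_def)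
next
  fix e' assume e': "e' \<in> tedges H'"
  have bg: "bij_betw g (tedges H) (tedges H')" using iso unfolding graph_iso_def by auto
  obtain e where e: "e \<in> tedges H" "e' = g e" using e' bg by (auto simp: bij_betw_def)
  obtain C where C: "simple_cycle H C" "e \<in> C"
    and uniq: "\<And>C2. simple_cycle H C2 \<Longrightarrow> e \<in> C2 \<Longrightarrow> C2 = C"
    using ca e unfolding cactus_def by metis
  show "\<exists>!C'. simple_cycle H' C' \<and> e' \<in> C'"
  proof (rule ex1I[of _ "g ` C"])
    show "simple_cycle H' (g ` C) \<and> e' \<in> g ` C" using simple_cycle_graph_iso[OF iso C(1)] C e by auto
  next
    fix C' assume C': "simple_cycle H' C' \<and> e' \<in> C'"
    then have "C' \<in> pads H'" by (simp add: pads_def)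
    then have "C' \<in> (`) g ` pads H" unfolding pads_graph_iso[OF iso] .
    then obtain C2 where C2: "simple_cycle H C2" "C' = g ` C2" by (auto simp: pads_def)
    moreover have "C2 \<subseteq> tedges H" using C2(1) by (simp add: simple_cycle_def)
    ultimately have "e \<in> C2"
      using C' e bg inj_on_image_mem_iff[of g "tedges H" e C2] by (simp add: bij_betw_def)
    then show "C' = g ` C" using uniq C2 by blast
  qed
qed

lemma oriented_cactus_graph_iso:
  assumes iso: "graph_iso H H' f g" and oc: "oriented_cactus H"
  shows "oriented_cactus H'"
  unfolding oriented_cactus_def
proof (intro conjI ballI)
  show "cactus H'" using cactus_graph_iso[OF iso] oc by (simp add: oriented_cactus_def)
next
  fix C' assume "C' \<in> pads H'"
  then obtain C where C: "C \<in> pads H" "C' = g ` C" using pads_graph_iso[OF iso] by auto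
  then obtain es where "directed_listing H C es" using oc by (auto simp: oriented_cactus_def)
  then show "\<exists>es. directed_listing H' C' es"
    using directed_listing_graph_iso[OF iso] C by (auto simp: pads_def simple_cycle_def)
qed

lemma finite_pads: "finite (tedges H) \<Longrightarrow> finite (pads H)"
  by (rule finite_subset[of _ "Pow (tedges H)"]) (auto simp: pads_def simple_cycle_def)

lemma free_cumulant_pad_graph_iso:
  assumes "unital_tracial_functional sc \<phi>" "free_cumulants \<phi> \<kappa>"
    and iso: "graph_iso H H' f g" and oc: "oriented_cactus H" "oriented_cactus H'"
    and C: "C \<in> pads H"
  shows "\<kappa> (map (tlab H') (SOME es. directed_listing H' (g ` C) es)) =
         \<kappa> (map (tlab H) (SOME es. directed_listing H C es))"
proof -
  have bg: "bij_betw g (tedges H) (tedges H')"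
    and lab: "\<forall>e\<in>tedges H. tlab H' (g e) = tlab H e"
    using iso unfolding graph_iso_def by auto
  let ?g = "inv_into (tedges H) g"
  have sc: "simple_cycle H C" and sub: "C \<subseteq> tedges H" using C by (auto simp: pads_def simple_cycle_def)
  have sub': "g ` C \<subseteq> tedges H'" using sub bg by (auto simp: bij_betw_def)
  have "g ` C \<in> pads H'" using C pads_graph_iso[OF iso] by auto
  then have "\<exists>es. directed_listing H' (g ` C) es" using oc(2) by (auto simp: oriented_cactus_def)
  then have l': "directed_listing H' (g ` C) es'" if "es' = (SOME es. directed_listing H' (g ` C) es)" for es'
    using that by (metis someI_ex)
  have "\<exists>es. directed_listing H C es" using oc(1) C by (auto simp: oriented_cactus_def)
  then have l: "directed_listing H C (SOME es. directed_listing H C es)" by (rule someI_ex)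
  define es' where "es' = (SOME es. directed_listing H' (g ` C) es)"
  have "directed_listing H (?g ` g ` C) (map ?g es')"
    using directed_listing_graph_iso[OF graph_iso_inv[OF iso] sub'] l' es'_def by simp
  then have pulled: "directed_listing H C (map ?g es')"
    using sub bg by (simp add: bij_betw_def inv_into_image_cancel)
  have "tlab H' e' = tlab H (?g e')" if "e' \<in> set es'" for e'
  proof -
    have "e' \<in> tedges H'" using that l'[OF es'_def] sub' by (auto simp: directed_listing_def)
    then have "?g e' \<in> tedges H" "g (?g e') = e'"
      using bg by (auto simp: bij_betw_def inv_into_into f_inv_into_f)
    then show ?thesis using lab by metis
  qed
  then have "map (tlab H') es' = map (tlab H) (map ?g es')" by simp
  then have "\<kappa> (map (tlab H') es') = \<kappa> (map (tlab H) (map ?g es'))" by (rule arg_cong)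
  also have "\<dots> = \<kappa> (map (tlab H) (SOME es. directed_listing H C es))"
    by (rule free_cumulant_directed_listing_eq[OF assms(1,2) sc l pulled])
  finally show ?thesis unfolding es'_def .
qed

lemma tau0_graph_iso:
  assumes tr: "unital_tracial_functional sc \<phi>" and fc: "free_cumulants \<phi> \<kappa>"
    and iso: "graph_iso H H' f g"
  shows "tau0 \<kappa> H' = tau0 \<kappa> H"
proof (cases "oriented_cactus H")
  case False
  then have "\<not> oriented_cactus H'" using oriented_cactus_graph_iso[OF graph_iso_inv[OF iso]] by blast
  then show ?thesis using False by (simp add: tau0_def)
next
  case True
  then have oc': "oriented_cactus H'" using oriented_cactus_graph_iso[OF iso] by blast
  have "inj_on ((`) g) (pads H)"
    using iso by (intro inj_on_subset[OF inj_on_image_Pow])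
      (auto simp: graph_iso_def bij_betw_def pads_def simple_cycle_def)
  then have "(\<Prod>C'\<in>pads H'. \<kappa> (map (tlab H') (SOME es. directed_listing H' C' es))) =
        (\<Prod>C\<in>pads H. \<kappa> (map (tlab H') (SOME es. directed_listing H' (g ` C) es)))"
    unfolding pads_graph_iso[OF iso] by (simp add: prod.reindex)
  also have "\<dots> = (\<Prod>C\<in>pads H. \<kappa> (map (tlab H) (SOME es. directed_listing H C es)))"
    using free_cumulant_pad_graph_iso[OF tr fc iso True oc'] by (rule prod.cong[OF refl])
  finally show ?thesis using True oc' by (simp add: tau0_def)
qed

section \<open>Walks, simple cycles and cacti\<close>

definition adj_via :: "('v, 'e, 'a) tgraph \<Rightarrow> 'e set \<Rightarrow> ('v \<times> 'v) set" where
  "adj_via H X = {(u, v). \<exists>e\<in>X. (tsrc H e = u \<and> ttgt H e = v) \<or> (tsrc H e = v \<and> ttgt H e = u)}"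

lemma adj_via_subset_adj_rel: "X \<subseteq> tedges H \<Longrightarrow> adj_via H X \<subseteq> adj_rel H"
  unfolding adj_via_def adj_rel_def by auto

lemma adj_rel_restrict: "adj_rel (H\<lparr>tverts := W, tedges := X\<rparr>) = adj_via H X"
  unfolding adj_via_def adj_rel_def by simp

definition walk :: "('v, 'e, 'a) tgraph \<Rightarrow> 'e set \<Rightarrow> 'v list \<Rightarrow> 'e list \<Rightarrow> bool" where
  "walk H X vs es \<longleftrightarrow> length vs = Suc (length es) \<and>
     (\<forall>i<length es. es ! i \<in> X \<and> {tsrc H (es ! i), ttgt H (es ! i)} = {vs ! i, vs ! Suc i})"

lemma walk_take:
  "walk H X vs es \<Longrightarrow> k \<le> length es \<Longrightarrow> walk H X (take (Suc k) vs) (take k es)"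
  unfolding walk_def by auto

lemma walk_mono: "walk H X vs es \<Longrightarrow> X \<subseteq> Y \<Longrightarrow> walk H Y vs es"
  unfolding walk_def by blast

lemma walk_edges: "walk H X vs es \<Longrightarrow> set es \<subseteq> X"
  unfolding walk_def by (auto simp: in_set_conv_nth)

lemma walk_snoc:
  assumes "walk H X vs es" "e \<in> X" "{tsrc H e, ttgt H e} = {last vs, z}"
  shows "walk H X (vs @ [z]) (es @ [e])"
proof -
  have "last vs = vs ! length es" using assms(1) unfolding walk_def
    by (metis diff_Suc_1 last_conv_nth list.size(3) nat.distinct(1))
  then show ?thesis
    using assms by (auto simp: walk_def nth_append less_Suc_eq)
qed

lemma walk_append:
  assumes p1: "walk H X vs1 es1" and p2: "walk H Y vs2 es2" and eq: "last vs1 = hd vs2"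
  shows "walk H (X \<union> Y) (vs1 @ tl vs2) (es1 @ es2)"
  unfolding walk_def
proof (intro conjI allI impI)
  have l1: "length vs1 = Suc (length es1)" and l2: "length vs2 = Suc (length es2)"
    using p1 p2 by (auto simp: walk_def)
  then have join: "vs1 ! length es1 = vs2 ! 0"
    using eq by (metis diff_Suc_1 hd_conv_nth last_conv_nth list.size(3) nat.distinct(1))
  show "length (vs1 @ tl vs2) = Suc (length (es1 @ es2))" using l1 l2 by simp
  fix i assume i: "i < length (es1 @ es2)"
  have "(vs1 @ tl vs2) ! i = (if i < length es1 then vs1 ! i else vs2 ! (i - length es1))"
    "(vs1 @ tl vs2) ! Suc i = (if i < length es1 then vs1 ! Suc i else vs2 ! (Suc i - length es1))"
    using l1 l2 i join by (auto simp: nth_append nth_tl less_Suc_eq Suc_diff_le Suc_diff_Suc)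
  then show "{tsrc H ((es1 @ es2) ! i), ttgt H ((es1 @ es2) ! i)} =
      {(vs1 @ tl vs2) ! i, (vs1 @ tl vs2) ! Suc i}"
    using p1 p2 i by (auto simp: walk_def nth_append Suc_diff_le not_less)
  show "(es1 @ es2) ! i \<in> X \<union> Y"
    using p1 p2 i by (auto simp: walk_def nth_append)
qed

lemma walk_distinct_edges:
  assumes "walk H X vs es" "distinct vs"
  shows "distinct es"
proof (rule distinct_conv_nth[THEN iffD2], intro allI impI)
  fix i j assume ij: "i < length es" "j < length es" "i \<noteq> j"
  have lv: "length vs = Suc (length es)" using assms(1) by (simp add: walk_def)
  show "es ! i \<noteq> es ! j"
  proof
    assume "es ! i = es ! j"
    then have "{vs ! i, vs ! Suc i} = {vs ! j, vs ! Suc j}"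
      using assms(1) ij by (metis walk_def)
    then have "(i = j \<or> i = Suc j) \<and> (Suc i = j \<or> Suc i = Suc j)"
      using assms(2) ij lv by (auto simp: doubleton_eq_iff nth_eq_iff_index_eq)
    then show False using ij by auto
  qed
qed

lemma walk_verts:
  assumes "walk H X vs es" "es \<noteq> []" "\<forall>e\<in>X. tsrc H e \<in> W \<and> ttgt H e \<in> W"
  shows "set vs \<subseteq> W"
proof
  fix v assume "v \<in> set vs"
  then obtain i where i: "i < length vs" "v = vs ! i" by (metis in_set_conv_nth)
  have lv: "length vs = Suc (length es)" using assms(1) by (simp add: walk_def)
  obtain k where "k < length es" "v \<in> {vs ! k, vs ! Suc k}"
  proof (cases "i < length es")
    case False
    then have "i = Suc (length es - 1)" "length es - 1 < length es" using i lv assms(2) by auto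
    then show ?thesis using that i by auto
  qed (use i in auto)
  moreover from this(1) have "es ! k \<in> X" "{tsrc H (es ! k), ttgt H (es ! k)} = {vs ! k, vs ! Suc k}"
    using assms(1) by (auto simp: walk_def)
  ultimately show "v \<in> W" using assms(3) by (metis insert_iff singletonD)
qed

lemma rtrancl_adj_via_simple_walk:
  assumes "(x, y) \<in> (adj_via H X)\<^sup>*"
  obtains vs es where "walk H X vs es" "hd vs = x" "last vs = y" "distinct vs"
  using assms
proof (induction arbitrary: thesis rule: rtrancl_induct)
  case base
  show ?case by (rule base[of "[x]" "[]"]) (simp_all add: walk_def)
next
  case (step y z)
  then obtain vs es where p: "walk H X vs es" "hd vs = x" "last vs = y" "distinct vs" by blast
  obtain e where e: "e \<in> X" "{tsrc H e, ttgt H e} = {y, z}"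
    using step(2) unfolding adj_via_def by auto
  have lv: "length vs = Suc (length es)" using p by (simp add: walk_def)
  show ?case
  proof (cases "z \<in> set vs")
    case True
    then obtain k where k: "k < length vs" "vs ! k = z" by (metis in_set_conv_nth)
    show ?thesis
    proof (rule step.prems)
      show "walk H X (take (Suc k) vs) (take k es)" using walk_take[OF p(1)] k lv by simp
      show "hd (take (Suc k) vs) = x" using p lv by simp
      show "last (take (Suc k) vs) = z" using k by (simp add: take_Suc_conv_app_nth)
      show "distinct (take (Suc k) vs)" using p by simp
    qed
  next
    case False
    show ?thesis
    proof (rule step.prems)
      show "walk H X (vs @ [z]) (es @ [e])" using walk_snoc[OF p(1) e(1)] e p by simp
      show "hd (vs @ [z]) = x" using p lv by (cases vs) auto
      show "distinct (vs @ [z])" using p False by simp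
    qed simp
  qed
qed

lemma closed_walk_simple_cycle:
  assumes p: "walk H X vs es" and "es \<noteq> []" "hd vs = last vs"
    and "distinct (butlast vs)" "distinct es" "X \<subseteq> tedges H"
  shows "simple_cycle H (set es)"
  unfolding simple_cycle_def
proof (intro conjI exI[of _ es] exI[of _ "butlast vs"] allI impI)
  have lv: "length vs = Suc (length es)" using p by (simp add: walk_def)
  then have last: "vs ! length es = vs ! 0"
    using assms(3) by (metis diff_Suc_1 hd_conv_nth last_conv_nth list.size(3) nat.distinct(1))
  show "set es \<subseteq> tedges H" using walk_edges[OF p] assms(6) by auto
  show "es \<noteq> []" "distinct es" "set es = set es" "distinct (butlast vs)"
    using assms by auto
  show "length (butlast vs) = length es" using lv by simp
  fix i assume i: "i < length es"
  have "butlast vs ! i = vs ! i" using i lv by (simp add: nth_butlast)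
  moreover have "butlast vs ! (Suc i mod length es) = vs ! Suc i"
  proof (cases "Suc i = length es")
    case True then show ?thesis using lv last assms(2) by (simp add: nth_butlast)
  next
    case False then show ?thesis using i lv by (simp add: nth_butlast)
  qed
  ultimately show "{tsrc H (es ! i), ttgt H (es ! i)} = {butlast vs ! i, butlast vs ! (Suc i mod length es)}"
    using p i by (simp add: walk_def)
qed

lemma walk_first_hit:
  assumes p: "walk H X vs es" "distinct vs" "hd vs = x" and y: "last vs \<in> W" "last vs \<noteq> x"
  obtains vs' es' where "walk H X vs' es'" "distinct vs'" "hd vs' = x" "last vs' \<in> W"
    "last vs' \<noteq> x" "set vs' \<inter> W \<subseteq> {x, last vs'}"
proof -
  define L where "L = length es"
  have lv: "length vs = Suc L" using p L_def by (simp add: walk_def)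
  then have "vs \<noteq> []" by auto
  then have vs0: "vs ! 0 = x" and vsL: "vs ! L = last vs"
    using p lv by (auto simp: hd_conv_nth last_conv_nth)
  define j where "j = (LEAST j. 0 < j \<and> j \<le> L \<and> vs ! j \<in> W)"
  have "0 < L \<and> L \<le> L \<and> vs ! L \<in> W" using vs0 vsL y by (cases L) auto
  then have j: "0 < j" "j \<le> L" "vs ! j \<in> W"
    using LeastI[of "\<lambda>j. 0 < j \<and> j \<le> L \<and> vs ! j \<in> W"] by (auto simp: j_def)
  have before_j: "vs ! i \<notin> W" if "0 < i" "i < j" for i
    using not_less_Least[of i "\<lambda>j. 0 < j \<and> j \<le> L \<and> vs ! j \<in> W"] that j by (auto simp: j_def)
  let ?vs' = "take (Suc j) vs"
  show ?thesis
  proof (rule that)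
    show "walk H X ?vs' (take j es)" using walk_take[OF p(1)] j L_def by simp
    show "distinct ?vs'" "hd ?vs' = x" using p lv by auto
    have last: "last ?vs' = vs ! j" using j lv by (simp add: take_Suc_conv_app_nth)
    then show "last ?vs' \<in> W" using j by simp
    have "vs ! j \<noteq> vs ! 0" using j lv p(2) by (simp add: nth_eq_iff_index_eq)
    then show "last ?vs' \<noteq> x" using last vs0 by simp
    show "set ?vs' \<inter> W \<subseteq> {x, last ?vs'}"
    proof
      fix v assume "v \<in> set ?vs' \<inter> W"
      then obtain i where "i \<le> j" "v = vs ! i" "v \<in> W"
        using j lv by (auto simp: in_set_conv_nth less_Suc_eq_le)
      then show "v \<in> {x, last ?vs'}"
        using before_j[of i] vs0 last by (cases "i = 0"; cases "i = j") auto
    qed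
  qed
qed

lemma simple_cycle_of_two_walks:
  assumes p1: "walk H A vs1 es1" "distinct vs1" "hd vs1 = x" "last vs1 = q"
      "set vs1 \<inter> W \<subseteq> {x, q}" "x \<noteq> q"
    and p2: "walk H B vs2 es2" "distinct vs2" "hd vs2 = q" "last vs2 = x" "set vs2 \<subseteq> W"
    and AB: "A \<inter> B = {}" "A \<union> B \<subseteq> tedges H"
  shows "simple_cycle H (set (es1 @ es2))"
proof -
  have "vs2 \<noteq> []" using p2(1) by (auto simp: walk_def)
  then obtain rest where rest: "vs2 = q # rest" using p2(3) by (cases vs2) auto
  then have vs2: "vs2 = q # rest" "rest \<noteq> []" "last rest = x"
    using p2(4) p1(6) by (cases "rest = []"; simp)+
  have x_rest: "x \<notin> set (butlast rest)" and q_rest: "q \<notin> set rest"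
    using p2(2) vs2 by (metis append_butlast_last_id distinct.simps(2) distinct_append
        disjoint_iff list.set_intros(1))+
  have "distinct (vs1 @ butlast rest)"
  proof -
    have "set (butlast rest) \<subseteq> W" using p2(5) vs2 by (auto dest: in_set_butlastD)
    then have "set vs1 \<inter> set (butlast rest) = {}"
      using p1(5) x_rest q_rest by (auto dest: in_set_butlastD)
    then show ?thesis using p1(2) p2(2) vs2 by (simp add: distinct_butlast)
  qed
  moreover have "butlast (vs1 @ tl vs2) = vs1 @ butlast rest" "last (vs1 @ tl vs2) = x"
    using vs2 by (simp_all add: butlast_append)
  moreover have "hd (vs1 @ tl vs2) = x" using p1(1,3) by (cases vs1) (auto simp: walk_def)
  moreover have "distinct (es1 @ es2)"
    using walk_distinct_edges[OF p1(1,2)] walk_distinct_edges[OF p2(1,2)]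
      walk_edges[OF p1(1)] walk_edges[OF p2(1)] AB(1) by auto
  moreover have "es1 @ es2 \<noteq> []" using p2(1) vs2 by (auto simp: walk_def)
  ultimately show ?thesis
    using walk_append[OF p1(1) p2(1)] p1(4) p2(3) AB(2)
    by (intro closed_walk_simple_cycle[of H "A \<union> B" "vs1 @ tl vs2"]) auto
qed

lemma simple_cycle_through_edge:
  assumes f: "f \<in> X" "X \<subseteq> tedges H"
    and con: "(ttgt H f, tsrc H f) \<in> (adj_via H (X - {f}))\<^sup>*"
  obtains C where "simple_cycle H C" "f \<in> C" "C \<subseteq> X"
proof -
  obtain vs es where p: "walk H (X - {f}) vs es" "hd vs = ttgt H f" "last vs = tsrc H f" "distinct vs"
    using con by (rule rtrancl_adj_via_simple_walk)
  have "walk H X (vs @ [ttgt H f]) (es @ [f])"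
    using walk_snoc[OF walk_mono[OF p(1)] f(1)] p(3) by auto
  moreover have "hd (vs @ [ttgt H f]) = last (vs @ [ttgt H f])"
    using p(1,2) by (cases vs) (auto simp: walk_def)
  moreover have "distinct (es @ [f])"
    using walk_distinct_edges[OF p(1,4)] walk_edges[OF p(1)] by auto
  ultimately have "simple_cycle H (set (es @ [f]))"
    using p(4) f(2) by (intro closed_walk_simple_cycle) auto
  moreover have "set (es @ [f]) \<subseteq> X" using walk_edges[OF p(1)] f by auto
  ultimately show ?thesis using that by auto
qed

text \<open>Leave the shared vertex x along an A-walk towards y, stop at the first vertex q of W,
  and return from q to x inside B: the resulting simple cycle contains edges of A and of B.
  Its first B-edge f lies on a second simple cycle inside B, because B minus f still connects
  the ends of f; so f lies on two different simple cycles.\<close>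
lemma two_shared_vertices_not_cactus:
  assumes AB: "A \<inter> B = {}" "A \<union> B \<subseteq> tedges H"
    and endB: "\<forall>e\<in>B. tsrc H e \<in> W \<and> ttgt H e \<in> W"
    and conA: "(x, y) \<in> (adj_via H A)\<^sup>*"
    and conB: "\<forall>u\<in>W. \<forall>v\<in>W. (u, v) \<in> (adj_via H B)\<^sup>*"
    and tec: "\<forall>f\<in>B. (ttgt H f, tsrc H f) \<in> (adj_via H (B - {f}))\<^sup>*"
    and xy: "x \<in> W" "y \<in> W" "x \<noteq> y"
  shows "\<not> cactus H"
proof
  assume ca: "cactus H"
  obtain vs es where "walk H A vs es" "distinct vs" "hd vs = x" "last vs = y"
    using conA by (rule rtrancl_adj_via_simple_walk)
  then obtain vs1 es1 where p1: "walk H A vs1 es1" "distinct vs1" "hd vs1 = x"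
    "last vs1 \<in> W" "last vs1 \<noteq> x" "set vs1 \<inter> W \<subseteq> {x, last vs1}"
    using xy by (auto elim: walk_first_hit)
  obtain vs2 es2 where p2: "walk H B vs2 es2" "hd vs2 = last vs1" "last vs2 = x" "distinct vs2"
    using conB p1(4) xy(1) rtrancl_adj_via_simple_walk by metis
  have es2: "es2 \<noteq> []" using p1(5) p2 by (cases vs2) (auto simp: walk_def)
  have "simple_cycle H (set (es1 @ es2))"
    using p1 p2 AB walk_verts[OF p2(1) es2 endB]
    by (intro simple_cycle_of_two_walks[of H A vs1 es1 x "last vs1" W B vs2]) auto
  moreover have "es1 \<noteq> []" using p1(1,3,5) by (cases vs1) (auto simp: walk_def)
  then have "hd es1 \<in> set (es1 @ es2)" "hd es1 \<in> A" using walk_edges[OF p1(1)] by auto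
  moreover have f: "hd es2 \<in> set (es1 @ es2)" "hd es2 \<in> B" using es2 walk_edges[OF p2(1)] by auto
  moreover obtain C where "simple_cycle H C" "hd es2 \<in> C" "C \<subseteq> B"
    using simple_cycle_through_edge[of "hd es2" B H] f tec AB by blast
  moreover have "\<exists>!C. simple_cycle H C \<and> hd es2 \<in> C" using ca f AB by (auto simp: cactus_def)
  ultimately show False using AB(1) by blast
qed

lemma cyclic_step_out:
  assumes "i0 < (n::nat)" "P i0" "j0 < n" "\<not> P j0"
  shows "\<exists>i<n. P i \<and> \<not> P (Suc i mod n)"
proof (rule ccontr)
  assume "\<not> ?thesis"
  then have step: "P (Suc i mod n)" if "i < n" "P i" for i using that by blast
  have "P ((i0 + k) mod n)" for k
  proof (induction k)
    case (Suc k)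
    then show ?case using step[of "(i0 + k) mod n"] assms(1) by (simp add: mod_Suc_eq)
  qed (use assms in simp)
  from this[of "j0 + n - i0"] show False using assms by simp
qed

text \<open>A simple cycle that changed sides would do so at least twice, each time through the
  only shared vertex c, which would then occur twice on the cycle.\<close>
lemma simple_cycle_within_side:
  assumes sc: "simple_cycle H C" and E: "tedges H \<subseteq> A \<union> B"
    and endA: "\<forall>e\<in>A. tsrc H e \<in> WA \<and> ttgt H e \<in> WA"
    and endB: "\<forall>e\<in>B. tsrc H e \<in> WB \<and> ttgt H e \<in> WB"
    and W: "WA \<inter> WB \<subseteq> {c}"
  shows "C \<subseteq> A \<or> C \<subseteq> B"
proof (rule ccontr)
  assume mixed: "\<not> (C \<subseteq> A \<or> C \<subseteq> B)"
  obtain es vs where C: "C \<subseteq> tedges H" "distinct es" "set es = C"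
    "length vs = length es" "distinct vs"
    and ends: "\<forall>i<length es. {tsrc H (es ! i), ttgt H (es ! i)} = {vs ! i, vs ! (Suc i mod length es)}"
    using sc unfolding simple_cycle_def by blast
  let ?n = "length es"
  have side: "es ! i \<in> A \<or> es ! i \<in> B" if "i < ?n" for i
    using that C(1,3) E nth_mem by blast
  obtain a b where "a \<in> C" "a \<notin> B" "b \<in> C" "b \<notin> A" using mixed by blast
  then obtain i0 j0 where i0: "i0 < ?n" "es ! i0 \<in> A" and j0: "j0 < ?n" "es ! j0 \<notin> A"
    using side C(3) by (metis in_set_conv_nth)
  have at_c: "vs ! (Suc i mod ?n) = c"
    if "i < ?n" "(es ! i \<in> A) \<noteq> (es ! (Suc i mod ?n) \<in> A)" for i
  proof -
    have k: "Suc i mod ?n < ?n" by (rule mod_less_divisor) (use that(1) in linarith)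
    have "vs ! (Suc i mod ?n) \<in> {tsrc H (es ! i), ttgt H (es ! i)}"
      "vs ! (Suc i mod ?n) \<in> {tsrc H (es ! (Suc i mod ?n)), ttgt H (es ! (Suc i mod ?n))}"
      using ends that(1) k by auto
    then have "vs ! (Suc i mod ?n) \<in> WA \<inter> WB"
      using that(2) side[OF that(1)] side[OF k] endA endB by (cases "es ! i \<in> A") auto
    then show ?thesis using W by blast
  qed
  obtain i where i: "i < ?n" "es ! i \<in> A" "es ! (Suc i mod ?n) \<notin> A"
    using cyclic_step_out[of i0 ?n "\<lambda>i. es ! i \<in> A" j0] i0 j0 by blast
  obtain j where j: "j < ?n" "es ! j \<notin> A" "es ! (Suc j mod ?n) \<in> A"
    using cyclic_step_out[of j0 ?n "\<lambda>i. es ! i \<notin> A" i0] i0 j0 by blast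
  have "vs ! (Suc i mod ?n) = vs ! (Suc j mod ?n)" using at_c i j by simp
  moreover have "0 < ?n" using i(1) by linarith
  ultimately have "succ_mod ?n i = succ_mod ?n j"
    using C(4,5) by (simp add: succ_mod_def nth_eq_iff_index_eq)
  then show False using inj_onD[OF inj_on_succ_mod] i j by fastforce
qed

section \<open>Splitting a test graph at a cut vertex\<close>

lemma simple_cycle_restrict:
  "X \<subseteq> tedges H \<Longrightarrow>
    simple_cycle (H\<lparr>tverts := W, tedges := X\<rparr>) C \<longleftrightarrow> simple_cycle H C \<and> C \<subseteq> X"
  unfolding simple_cycle_def by auto

lemma directed_listing_restrict:
  "directed_listing (H\<lparr>tverts := W, tedges := X\<rparr>) = directed_listing H"
  unfolding directed_listing_def by (simp add: fun_eq_iff)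

lemma simple_cycle_nonempty: "simple_cycle H C \<Longrightarrow> C \<noteq> {}"
  unfolding simple_cycle_def by auto

locale cut_vertex_split =
  fixes H :: "('w, 'f, 'a) tgraph" and A B :: "'f set" and WA WB :: "'w set" and c :: 'w
  assumes edges_split: "tedges H = A \<union> B" and sides_disjoint: "A \<inter> B = {}"
    and verts_split: "tverts H = WA \<union> WB" and sides_meet: "WA \<inter> WB = {c}"
    and ends_A: "\<forall>e\<in>A. tsrc H e \<in> WA \<and> ttgt H e \<in> WA"
    and ends_B: "\<forall>e\<in>B. tsrc H e \<in> WB \<and> ttgt H e \<in> WB"
    and connected_A: "connected_graph (H\<lparr>tverts := WA, tedges := A\<rparr>)"
    and connected_B: "connected_graph (H\<lparr>tverts := WB, tedges := B\<rparr>)"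
begin

abbreviation "HA \<equiv> H\<lparr>tverts := WA, tedges := A\<rparr>"
abbreviation "HB \<equiv> H\<lparr>tverts := WB, tedges := B\<rparr>"

lemma connected: "connected_graph H"
proof -
  have c: "c \<in> WA" "c \<in> WB" using sides_meet by auto
  have "(u, c) \<in> (adj_rel H)\<^sup>*" "(c, u) \<in> (adj_rel H)\<^sup>*" if "u \<in> WA \<union> WB" for u
  proof -
    have "(adj_via H A)\<^sup>* \<subseteq> (adj_rel H)\<^sup>*" "(adj_via H B)\<^sup>* \<subseteq> (adj_rel H)\<^sup>*"
      using adj_via_subset_adj_rel edges_split by (metis rtrancl_mono sup.cobounded1 sup.cobounded2)+
    moreover have "(u, c) \<in> (adj_via H A)\<^sup>* \<and> (c, u) \<in> (adj_via H A)\<^sup>* \<or>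
        (u, c) \<in> (adj_via H B)\<^sup>* \<and> (c, u) \<in> (adj_via H B)\<^sup>*"
      using that c connected_A connected_B unfolding connected_graph_def adj_rel_restrict by auto
    ultimately show "(u, c) \<in> (adj_rel H)\<^sup>*" "(c, u) \<in> (adj_rel H)\<^sup>*" by blast+
  qed
  then show ?thesis
    using c unfolding connected_graph_def verts_split by (blast intro: rtrancl_trans)
qed

lemma pads_split: "pads H = pads HA \<union> pads HB" and pads_sides_disjoint: "pads HA \<inter> pads HB = {}"
proof -
  have "C \<subseteq> A \<or> C \<subseteq> B" if "simple_cycle H C" for C
    using simple_cycle_within_side[OF that _ ends_A ends_B] edges_split sides_meet by blast
  then show "pads H = pads HA \<union> pads HB"
    using edges_split by (auto simp: pads_def simple_cycle_restrict)
  show "pads HA \<inter> pads HB = {}"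
    using edges_split sides_disjoint simple_cycle_nonempty
    by (fastforce simp: pads_def simple_cycle_restrict)
qed

lemma simple_cycle_through_side_edge:
  "e \<in> A \<Longrightarrow> simple_cycle H C \<and> e \<in> C \<longleftrightarrow> simple_cycle HA C \<and> e \<in> C"
  "e \<in> B \<Longrightarrow> simple_cycle H C \<and> e \<in> C \<longleftrightarrow> simple_cycle HB C \<and> e \<in> C"
  using pads_split sides_disjoint edges_split by (auto simp: pads_def simple_cycle_restrict)

lemma cactus_iff: "cactus H \<longleftrightarrow> cactus HA \<and> cactus HB"
  using connected connected_A connected_B
  unfolding cactus_def edges_split ball_Un
  by (simp add: simple_cycle_through_side_edge cong: ball_cong)

lemma oriented_cactus_iff: "oriented_cactus H \<longleftrightarrow> oriented_cactus HA \<and> oriented_cactus HB"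
  unfolding oriented_cactus_def cactus_iff pads_split directed_listing_restrict by blast

lemma tau0_split:
  assumes "finite (tedges H)"
  shows "tau0 \<kappa> H = tau0 \<kappa> HA * tau0 \<kappa> HB"
proof (cases "oriented_cactus H")
  case True
  have "finite (pads HA)" "finite (pads HB)" using finite_pads[OF assms] pads_split by auto
  then show ?thesis
    using True oriented_cactus_iff
    unfolding tau0_def pads_split directed_listing_restrict
    by (simp add: prod.union_disjoint[OF _ _ pads_sides_disjoint])
next
  case False
  then show ?thesis using oriented_cactus_iff unfolding tau0_def by auto
qed

end

lemma block_of_eq:
  assumes "partition_on A P" "B \<in> P" "x \<in> B"
  shows "block_of P x = B"
  unfolding block_of_def
proof (rule the_equality)
  fix B' assume "B' \<in> P \<and> x \<in> B'"
  then show "B' = B" using assms unfolding partition_on_def disjoint_def by blast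
qed (use assms in simp)

lemma block_of_in:
  assumes "partition_on A P" "x \<in> A"
  shows "block_of P x \<in> P" "x \<in> block_of P x"
proof -
  obtain B where "B \<in> P" "x \<in> B" using assms partition_onD1 by blast
  then show "block_of P x \<in> P" "x \<in> block_of P x" using block_of_eq[OF assms(1)] by auto
qed

lemma rtrancl_adj_rel_map:
  assumes "(u, v) \<in> (adj_rel T)\<^sup>*"
    and "\<forall>e\<in>tedges T. m e \<in> X \<and> tsrc H (m e) = h (tsrc T e) \<and> ttgt H (m e) = h (ttgt T e)"
  shows "(h u, h v) \<in> (adj_via H X)\<^sup>*"
  using assms(1)
proof (induction rule: rtrancl_induct)
  case (step y z)
  then have "(h y, h z) \<in> adj_via H X"
    using assms(2) unfolding adj_rel_def adj_via_def by force
  then show ?case using step by auto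
qed simp

definition partition_pullback :: "'x set \<Rightarrow> ('x \<Rightarrow> 'y) \<Rightarrow> 'y set set \<Rightarrow> 'x set set" where
  "partition_pullback X h P = (\<lambda>B. X \<inter> h -` B) ` P - {{}}"

lemma partition_on_pullback:
  assumes "partition_on A P" "h ` X \<subseteq> A"
  shows "partition_on X (partition_pullback X h P)"
proof -
  have "partition_on (X \<inter> h -` A) ((\<inter>) X ` ((-`) h ` P - {{}}) - {{}})"
    by (intro partition_on_restrict partition_on_vimage assms(1))
  moreover have "X \<inter> h -` A = X" using assms(2) by auto
  moreover have "(\<inter>) X ` ((-`) h ` P - {{}}) - {{}} = partition_pullback X h P"
    unfolding partition_pullback_def by auto
  ultimately show ?thesis by simp
qed

lemma block_of_pullback:
  assumes P: "partition_on A P" and h: "h ` X \<subseteq> A" and x: "x \<in> X"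
  shows "block_of (partition_pullback X h P) x = X \<inter> h -` block_of P (h x)"
proof (rule block_of_eq[OF partition_on_pullback[OF P h]])
  have "block_of P (h x) \<in> P" "h x \<in> block_of P (h x)" using block_of_in[OF P] h x by auto
  then show "X \<inter> h -` block_of P (h x) \<in> partition_pullback X h P"
    "x \<in> X \<inter> h -` block_of P (h x)"
    using x unfolding partition_pullback_def by auto
qed

lemma pullback_block_representative:
  assumes P: "partition_on A P" and h: "h ` X \<subseteq> A" and x: "x \<in> X"
  shows "block_of P (h (SOME u. u \<in> block_of (partition_pullback X h P) x)) = block_of P (h x)"
proof -
  have "block_of (partition_pullback X h P) x \<noteq> {}"
    using block_of_in[OF partition_on_pullback[OF P h] x] by auto
  then have "(SOME u. u \<in> block_of (partition_pullback X h P) x) \<in> X \<inter> h -` block_of P (h x)"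
    using block_of_pullback[OF P h x] by (metis ex_in_conv someI_ex)
  then show ?thesis using block_of_eq[OF P block_of_in(1)[OF P]] h x by auto
qed

text \<open>The choice of a point is harmless: all points of a block of the pullback are mapped
  into one block of P.\<close>
lemma bij_betw_pullback_blocks:
  assumes P: "partition_on A P" and h: "h ` X \<subseteq> A"
  shows "bij_betw (\<lambda>B. block_of P (h (SOME u. u \<in> B))) (partition_pullback X h P) (block_of P ` h ` X)"
proof -
  let ?Q = "partition_pullback X h P"
  let ?f = "\<lambda>B. block_of P (h (SOME u. u \<in> B))"
  have Q: "partition_on X ?Q" by (rule partition_on_pullback[OF P h])
  have some_in: "(SOME u. u \<in> B) \<in> B" "(SOME u. u \<in> B) \<in> X" if B: "B \<in> ?Q" for B
  proof -
    have "B \<noteq> {}" using partition_onD3[OF Q] B by blast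
    then show "(SOME u. u \<in> B) \<in> B" by (metis ex_in_conv someI_ex)
    then show "(SOME u. u \<in> B) \<in> X" using partition_onD1[OF Q] B by blast
  qed
  have recover: "B = X \<inter> h -` ?f B" if B: "B \<in> ?Q" for B
  proof -
    have "B = block_of ?Q (SOME u. u \<in> B)" using block_of_eq[OF Q B some_in(1)[OF B]] by (rule sym)
    also have "\<dots> = X \<inter> h -` ?f B" by (rule block_of_pullback[OF P h some_in(2)[OF B]])
    finally show ?thesis .
  qed
  show ?thesis
  proof (rule bij_betw_imageI)
    show "inj_on ?f ?Q"
    proof (rule inj_onI)
      fix B1 B2 assume B: "B1 \<in> ?Q" "B2 \<in> ?Q" "?f B1 = ?f B2"
      have "B1 = X \<inter> h -` ?f B1" by (rule recover[OF B(1)])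
      also have "\<dots> = X \<inter> h -` ?f B2" using B(3) by (rule arg_cong)
      also have "\<dots> = B2" by (rule recover[OF B(2), symmetric])
      finally show "B1 = B2" .
    qed
    show "?f ` ?Q = block_of P ` h ` X"
      using some_in(2) pullback_block_representative[OF P h] block_of_in(1)[OF Q]
      by (auto intro!: image_eqI)
  qed
qed

lemma quot_graph_pullback_iso:
  assumes P: "partition_on A P" and h: "h ` tverts T \<subseteq> A"
    and wf: "\<forall>e\<in>tedges T. tsrc T e \<in> tverts T \<and> ttgt T e \<in> tverts T"
    and m: "inj_on m (tedges T)" "tedges H = m ` tedges T"
    and ends: "\<forall>e\<in>tedges T. tsrc H (m e) = block_of P (h (tsrc T e)) \<and>
                 ttgt H (m e) = block_of P (h (ttgt T e)) \<and> tlab H (m e) = tlab T e"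
    and verts: "tverts H = block_of P ` h ` tverts T"
  shows "graph_iso (quot_graph T (partition_pullback (tverts T) h P)) H
           (\<lambda>B. block_of P (h (SOME u. u \<in> B))) m"
  using bij_betw_pullback_blocks[OF P h] m ends wf pullback_block_representative[OF P h]
    block_of_in(1)[OF partition_on_pullback[OF P h]]
  unfolding graph_iso_def verts by (auto simp: quot_graph_def bij_betw_def)

text \<open>Only these partitions of the glued vertex set contribute to tau.\<close>
definition side_preserving :: "'v1 \<Rightarrow> ('v1 + 'v2) set set \<Rightarrow> bool" where
  "side_preserving v1 P \<longleftrightarrow> (\<forall>B\<in>P. Inl v1 \<in> B \<or> B \<subseteq> range Inl \<or> B \<subseteq> range Inr)"

lemma glue_vertex_glued [simp]: "glue_vertex v1 v2 v2 = Inl v1"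
  by (simp add: glue_vertex_def)

lemma glue_vertex_other [simp]: "w \<noteq> v2 \<Longrightarrow> glue_vertex v1 v2 w = Inr w"
  by (simp add: glue_vertex_def)

definition glue_partition ::
    "'v1 \<Rightarrow> 'v2 \<Rightarrow> 'v1 set set \<Rightarrow> 'v2 set set \<Rightarrow> ('v1 + 'v2) set set" where
  "glue_partition v1 v2 P1 P2 =
     {Inl ` B1 | B1. B1 \<in> P1 \<and> v1 \<notin> B1} \<union> {Inr ` B2 | B2. B2 \<in> P2 \<and> v2 \<notin> B2} \<union>
     {Inl ` block_of P1 v1 \<union> Inr ` (block_of P2 v2 - {v2})}"

lemma glue_partition_cases:
  assumes "X \<in> glue_partition v1 v2 P1 P2"
  obtains (left) B1 where "X = Inl ` B1" "B1 \<in> P1" "v1 \<notin> B1"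
    | (right) B2 where "X = Inr ` B2" "B2 \<in> P2" "v2 \<notin> B2"
    | (central) "X = Inl ` block_of P1 v1 \<union> Inr ` (block_of P2 v2 - {v2})"
  using assms unfolding glue_partition_def by blast

lemma partition_on_subset_eq:
  assumes "partition_on A P" "partition_on A Q" "P \<subseteq> Q"
  shows "P = Q"
proof (intro equalityI subsetI)
  fix X assume X: "X \<in> Q"
  then obtain x where "x \<in> X" using partition_onD3[OF assms(2)] by (metis ex_in_conv)
  moreover have "x \<in> A" using X \<open>x \<in> X\<close> partition_onD1[OF assms(2)] by blast
  then obtain Y where "Y \<in> P" "x \<in> Y" using partition_onD1[OF assms(1)] by blast
  ultimately show "X \<in> P"
    using block_of_eq[OF assms(2) X] block_of_eq[OF assms(2)] assms(3) by (metis subsetD)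
qed (use assms(3) in blast)

locale glued_vertex_sets =
  fixes V1 :: "'v1 set" and V2 :: "'v2 set" and v1 :: 'v1 and v2 :: 'v2
  assumes v1: "v1 \<in> V1" and v2: "v2 \<in> V2"
begin

abbreviation "VG \<equiv> Inl ` V1 \<union> Inr ` (V2 - {v2}) :: ('v1 + 'v2) set"

context
  fixes P1 P2 assumes P1: "partition_on V1 P1" and P2: "partition_on V2 P2"
begin

abbreviation "central \<equiv> Inl ` block_of P1 v1 \<union> Inr ` (block_of P2 v2 - {v2})"

lemma central_blocks: "block_of P1 v1 \<in> P1" "v1 \<in> block_of P1 v1"
    "block_of P2 v2 \<in> P2" "v2 \<in> block_of P2 v2"
  using block_of_in[OF P1 v1] block_of_in[OF P2 v2] by auto

lemma Union_glue_partition: "\<Union> (glue_partition v1 v2 P1 P2) = VG"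
proof (intro equalityI subsetI)
  fix z assume "z \<in> \<Union> (glue_partition v1 v2 P1 P2)"
  then show "z \<in> VG"
    using partition_onD1[OF P1] partition_onD1[OF P2] central_blocks
    unfolding glue_partition_def by blast
next
  fix z assume z: "z \<in> VG"
  show "z \<in> \<Union> (glue_partition v1 v2 P1 P2)"
  proof (cases z)
    case (Inl u)
    then have u: "u \<in> V1" using z by auto
    show ?thesis
    proof (cases "v1 \<in> block_of P1 u")
      case True
      then have "block_of P1 v1 = block_of P1 u" by (rule block_of_eq[OF P1 block_of_in(1)[OF P1 u]])
      then have "z \<in> central" using block_of_in(2)[OF P1 u] Inl by simp
      then show ?thesis unfolding glue_partition_def by blast
    next
      case False
      then have "Inl ` block_of P1 u \<in> glue_partition v1 v2 P1 P2"
        using block_of_in(1)[OF P1 u] unfolding glue_partition_def by blast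
      then show ?thesis using block_of_in(2)[OF P1 u] Inl by blast
    qed
  next
    case (Inr w)
    then have w: "w \<in> V2" "w \<noteq> v2" using z by auto
    show ?thesis
    proof (cases "v2 \<in> block_of P2 w")
      case True
      then have "block_of P2 v2 = block_of P2 w" by (rule block_of_eq[OF P2 block_of_in(1)[OF P2 w(1)]])
      then have "z \<in> central" using block_of_in(2)[OF P2 w(1)] Inr w by simp
      then show ?thesis unfolding glue_partition_def by blast
    next
      case False
      then have "Inr ` block_of P2 w \<in> glue_partition v1 v2 P1 P2"
        using block_of_in(1)[OF P2 w(1)] unfolding glue_partition_def by blast
      then show ?thesis using block_of_in(2)[OF P2 w(1)] Inr by blast
    qed
  qed
qed

text \<open>Every block of the glued partition is determined by any of its points z: it is the
  central block if the block of z on its own side contains the glued vertex, and the copy of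
  that block otherwise.\<close>
lemma glue_partition_disjoint:
  assumes "X \<in> glue_partition v1 v2 P1 P2" "Y \<in> glue_partition v1 v2 P1 P2" "z \<in> X" "z \<in> Y"
  shows "X = Y"
proof -
  define blk where "blk z = (case z of
      Inl u \<Rightarrow> if v1 \<in> block_of P1 u then central else Inl ` block_of P1 u
    | Inr w \<Rightarrow> if v2 \<in> block_of P2 w then central else Inr ` block_of P2 w)" for z
  have "X = blk z" if X: "X \<in> glue_partition v1 v2 P1 P2" "z \<in> X" for X
  proof -
    consider (left) B1 where "X = Inl ` B1" "B1 \<in> P1" "v1 \<notin> B1"
      | (right) B2 where "X = Inr ` B2" "B2 \<in> P2" "v2 \<notin> B2"
      | (central) "X = central"
      using X(1) unfolding glue_partition_def by blast
    then show ?thesis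
    proof cases
      case left
      then obtain u where u: "z = Inl u" "u \<in> B1" using X(2) by auto
      then have "block_of P1 u = B1" by (intro block_of_eq[OF P1 left(2)])
      then show ?thesis using left u by (simp add: blk_def)
    next
      case right
      then obtain w where w: "z = Inr w" "w \<in> B2" using X(2) by auto
      then have "block_of P2 w = B2" by (intro block_of_eq[OF P2 right(2)])
      then show ?thesis unfolding blk_def w(1) sum.case using right(1,3) by simp
    next
      case central
      show ?thesis
      proof (cases z)
        case (Inl u)
        then have "block_of P1 u = block_of P1 v1"
          using X(2) central by (intro block_of_eq[OF P1 central_blocks(1)]) auto
        then show ?thesis using central Inl central_blocks(2) by (simp add: blk_def)
      next
        case (Inr w)
        then have "block_of P2 w = block_of P2 v2"
          using X(2) central by (intro block_of_eq[OF P2 central_blocks(3)]) auto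
        then show ?thesis using central Inr central_blocks(4) by (simp add: blk_def)
      qed
    qed
  qed
  from this[OF assms(1,3)] this[OF assms(2,4)] show ?thesis by simp
qed

lemma partition_on_glue_partition: "partition_on VG (glue_partition v1 v2 P1 P2)"
proof (rule partition_onI)
  show "{} \<notin> glue_partition v1 v2 P1 P2"
    using partition_onD3[OF P1] partition_onD3[OF P2] central_blocks
    unfolding glue_partition_def by blast
qed (use Union_glue_partition glue_partition_disjoint in \<open>auto simp: disjnt_def\<close>)

lemma side_preserving_glue_partition: "side_preserving v1 (glue_partition v1 v2 P1 P2)"
  using central_blocks unfolding glue_partition_def side_preserving_def by auto

lemma vimage_Inl_central: "V1 \<inter> Inl -` central = block_of P1 v1"
  using partition_onD1[OF P1] central_blocks by auto

lemma vimage_glue_vertex_central: "V2 \<inter> glue_vertex v1 v2 -` central = block_of P2 v2"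
  using partition_onD1[OF P2] central_blocks v2 by (auto simp: glue_vertex_def split: if_splits)

lemma pullback_Inl_glue_partition: "partition_pullback V1 Inl (glue_partition v1 v2 P1 P2) = P1"
proof -
  have restrict: "V1 \<inter> Inl -` Inl ` B1 = B1" if "B1 \<in> P1" for B1
    using partition_onD1[OF P1] that by auto
  show ?thesis
  proof (intro equalityI subsetI)
    fix Y assume "Y \<in> partition_pullback V1 Inl (glue_partition v1 v2 P1 P2)"
    then obtain X where X: "X \<in> glue_partition v1 v2 P1 P2" "Y = V1 \<inter> Inl -` X" "Y \<noteq> {}"
      unfolding partition_pullback_def by auto
    from X(1) show "Y \<in> P1"
    proof (cases rule: glue_partition_cases)
      case (left B1)
      show ?thesis unfolding X(2) left(1) restrict[OF left(2)] by (rule left(2))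
    next
      case (right B2)
      then show ?thesis using X(2,3) by auto
    next
      case central
      then show ?thesis using X(2) vimage_Inl_central central_blocks(1) by (simp only:)
    qed
  next
    fix Y assume Y: "Y \<in> P1"
    have "Y = block_of P1 v1" if "v1 \<in> Y" using block_of_eq[OF P1 Y that] by simp
    then have "\<exists>X\<in>glue_partition v1 v2 P1 P2. V1 \<inter> Inl -` X = Y"
      using vimage_Inl_central restrict[OF Y] Y unfolding glue_partition_def by blast
    then show "Y \<in> partition_pullback V1 Inl (glue_partition v1 v2 P1 P2)"
      using partition_onD3[OF P1] Y unfolding partition_pullback_def by blast
  qed
qed

lemma pullback_glue_vertex_glue_partition:
  "partition_pullback V2 (glue_vertex v1 v2) (glue_partition v1 v2 P1 P2) = P2"
proof -
  have restrict: "V2 \<inter> glue_vertex v1 v2 -` Inr ` B2 = B2" if "B2 \<in> P2" "v2 \<notin> B2" for B2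
    using partition_onD1[OF P2] that by (auto simp: glue_vertex_def split: if_splits)
  show ?thesis
  proof (intro equalityI subsetI)
    fix Y assume "Y \<in> partition_pullback V2 (glue_vertex v1 v2) (glue_partition v1 v2 P1 P2)"
    then obtain X where X: "X \<in> glue_partition v1 v2 P1 P2" "Y = V2 \<inter> glue_vertex v1 v2 -` X"
      "Y \<noteq> {}"
      unfolding partition_pullback_def by auto
    from X(1) show "Y \<in> P2"
    proof (cases rule: glue_partition_cases)
      case (left B1)
      then show ?thesis using X(2,3) by (auto simp: glue_vertex_def split: if_splits)
    next
      case (right B2)
      show ?thesis unfolding X(2) right(1) restrict[OF right(2,3)] by (rule right(2))
    next
      case central
      then show ?thesis using X(2) vimage_glue_vertex_central central_blocks(3) by (simp only:)
    qed
  next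
    fix Y assume Y: "Y \<in> P2"
    have "Y = block_of P2 v2" if "v2 \<in> Y" using block_of_eq[OF P2 Y that] by simp
    then have "\<exists>X\<in>glue_partition v1 v2 P1 P2. V2 \<inter> glue_vertex v1 v2 -` X = Y"
      using vimage_glue_vertex_central restrict[OF Y] Y unfolding glue_partition_def by blast
    then show "Y \<in> partition_pullback V2 (glue_vertex v1 v2) (glue_partition v1 v2 P1 P2)"
      using partition_onD3[OF P2] Y unfolding partition_pullback_def by blast
  qed
qed

end

context
  fixes P assumes P: "partition_on VG P" and sp: "side_preserving v1 P"
begin

lemma Inl_image_pullback_block:
  assumes "B1 \<in> partition_pullback V1 Inl P" "v1 \<notin> B1"
  shows "Inl ` B1 \<in> P"
proof -
  obtain B where B: "B \<in> P" "B1 = V1 \<inter> Inl -` B" "B1 \<noteq> {}"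
    using assms(1) unfolding partition_pullback_def by auto
  then have "Inl v1 \<notin> B" "\<not> B \<subseteq> range Inr" using assms(2) v1 by auto
  then have "B \<subseteq> range Inl" using sp B(1) unfolding side_preserving_def by blast
  then have "B \<subseteq> Inl ` V1" using B(1) partition_onD1[OF P] by blast
  then have "Inl ` B1 = B" using B(2) by auto
  then show ?thesis using B(1) by simp
qed

lemma Inr_image_pullback_block:
  assumes "B2 \<in> partition_pullback V2 (glue_vertex v1 v2) P" "v2 \<notin> B2"
  shows "Inr ` B2 \<in> P"
proof -
  obtain B where B: "B \<in> P" "B2 = V2 \<inter> glue_vertex v1 v2 -` B" "B2 \<noteq> {}"
    using assms(1) unfolding partition_pullback_def by auto
  have "Inl v1 \<notin> B" using assms(2) v2 B(2) by auto
  moreover from this have "\<not> B \<subseteq> range Inl"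
    using B(2,3) by (auto simp: glue_vertex_def split: if_splits)
  ultimately have "B \<subseteq> range Inr" using sp B(1) unfolding side_preserving_def by blast
  then have B_sub: "B \<subseteq> Inr ` (V2 - {v2})" using B(1) partition_onD1[OF P] by blast
  have "Inr ` B2 = B"
  proof (intro equalityI subsetI)
    fix z :: "'v1 + 'v2" assume "z \<in> Inr ` B2"
    then obtain w where "z = Inr w" "w \<in> V2" "glue_vertex v1 v2 w \<in> B" using B(2) by auto
    moreover have "w \<noteq> v2" using \<open>Inl v1 \<notin> B\<close> \<open>glue_vertex v1 v2 w \<in> B\<close> by auto
    ultimately show "z \<in> B" by simp
  next
    fix z assume "z \<in> B"
    then obtain w where "z = Inr w" "w \<in> V2" "w \<noteq> v2" using B_sub by blast
    then show "z \<in> Inr ` B2" using B(2) \<open>z \<in> B\<close> by auto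
  qed
  then show ?thesis using B(1) by simp
qed

lemma glue_partition_central_block:
  "Inl ` (V1 \<inter> Inl -` block_of P (Inl v1)) \<union>
     Inr ` (V2 \<inter> glue_vertex v1 v2 -` block_of P (Inl v1) - {v2}) = block_of P (Inl v1)"
  (is "?L = ?c")
proof (intro equalityI subsetI)
  fix z assume "z \<in> ?L"
  then show "z \<in> ?c" by (auto simp: glue_vertex_def split: if_splits)
next
  fix z assume z: "z \<in> ?c"
  moreover have "?c \<subseteq> VG" using block_of_in(1)[OF P] partition_onD1[OF P] v1 by blast
  ultimately have "z \<in> Inl ` V1 \<or> z \<in> Inr ` (V2 - {v2})" by blast
  then show "z \<in> ?L" using z by (auto simp: glue_vertex_def)
qed

text \<open>Both sides are partitions of the glued vertex set, so the inclusion suffices.\<close>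
lemma glue_partition_pullbacks:
  "glue_partition v1 v2 (partition_pullback V1 Inl P) (partition_pullback V2 (glue_vertex v1 v2) P) = P"
proof -
  have Inl_V1: "Inl ` V1 \<subseteq> VG" and g_V2: "glue_vertex v1 v2 ` V2 \<subseteq> VG"
    using v1 by (auto simp: glue_vertex_def)
  have "glue_partition v1 v2 (partition_pullback V1 Inl P) (partition_pullback V2 (glue_vertex v1 v2) P)
      \<subseteq> P"
  proof
    fix X
    assume "X \<in> glue_partition v1 v2 (partition_pullback V1 Inl P)
                  (partition_pullback V2 (glue_vertex v1 v2) P)"
    then show "X \<in> P"
      by (cases rule: glue_partition_cases)
        (use Inl_image_pullback_block Inr_image_pullback_block block_of_pullback[OF P Inl_V1 v1]
          block_of_pullback[OF P g_V2 v2] glue_partition_central_block block_of_in(1)[OF P] v1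
          in simp_all)
  qed
  then show ?thesis
    using partition_on_subset_eq[OF partition_on_glue_partition P]
      partition_on_pullback[OF P Inl_V1] partition_on_pullback[OF P g_V2] by blast
qed

end

lemma bij_betw_pullbacks:
  "bij_betw (\<lambda>P. (partition_pullback V1 Inl P, partition_pullback V2 (glue_vertex v1 v2) P))
     {P. partition_on VG P \<and> side_preserving v1 P}
     ({P1. partition_on V1 P1} \<times> {P2. partition_on V2 P2})"
proof (rule bij_betw_byWitness[where f' = "\<lambda>(P1, P2). glue_partition v1 v2 P1 P2"])
  have "Inl ` V1 \<subseteq> VG" "glue_vertex v1 v2 ` V2 \<subseteq> VG" using v1 by (auto simp: glue_vertex_def)
  then show "(\<lambda>P. (partition_pullback V1 Inl P, partition_pullback V2 (glue_vertex v1 v2) P)) `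
      {P. partition_on VG P \<and> side_preserving v1 P} \<subseteq> {P1. partition_on V1 P1} \<times> {P2. partition_on V2 P2}"
    by (auto intro: partition_on_pullback)
  show "(\<lambda>(P1, P2). glue_partition v1 v2 P1 P2) ` ({P1. partition_on V1 P1} \<times> {P2. partition_on V2 P2})
      \<subseteq> {P. partition_on VG P \<and> side_preserving v1 P}"
    using partition_on_glue_partition side_preserving_glue_partition by auto
  show "\<forall>P\<in>{P. partition_on VG P \<and> side_preserving v1 P}. (\<lambda>(P1, P2). glue_partition v1 v2 P1 P2)
      (partition_pullback V1 Inl P, partition_pullback V2 (glue_vertex v1 v2) P) = P"
    using glue_partition_pullbacks by auto
  show "\<forall>Q\<in>{P1. partition_on V1 P1} \<times> {P2. partition_on V2 P2}.
      (\<lambda>P. (partition_pullback V1 Inl P, partition_pullback V2 (glue_vertex v1 v2) P))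
        ((\<lambda>(P1, P2). glue_partition v1 v2 P1 P2) Q) = Q"
    using pullback_Inl_glue_partition pullback_glue_vertex_glue_partition by auto
qed

end

lemma quot_graph_glue_simps:
  "tverts (quot_graph (glue T1 v1 T2 v2) P) = P"
  "tedges (quot_graph (glue T1 v1 T2 v2) P) = Inl ` tedges T1 \<union> Inr ` tedges T2"
  "tsrc (quot_graph (glue T1 v1 T2 v2) P) (Inl e) = block_of P (Inl (tsrc T1 e))"
  "ttgt (quot_graph (glue T1 v1 T2 v2) P) (Inl e) = block_of P (Inl (ttgt T1 e))"
  "tsrc (quot_graph (glue T1 v1 T2 v2) P) (Inr f) = block_of P (glue_vertex v1 v2 (tsrc T2 f))"
  "ttgt (quot_graph (glue T1 v1 T2 v2) P) (Inr f) = block_of P (glue_vertex v1 v2 (ttgt T2 f))"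
  "tlab (quot_graph (glue T1 v1 T2 v2) P) (Inl e) = tlab T1 e"
  "tlab (quot_graph (glue T1 v1 T2 v2) P) (Inr f) = tlab T2 f"
  by (simp_all add: quot_graph_def glue_def)

lemma test_graph_ends:
  "test_graph T \<Longrightarrow> e \<in> tedges T \<Longrightarrow> tsrc T e \<in> tverts T \<and> ttgt T e \<in> tverts T"
  by (simp add: test_graph_def wf_graph_def)

lemma test_graph_rtrancl:
  "test_graph T \<Longrightarrow> u \<in> tverts T \<Longrightarrow> v \<in> tverts T \<Longrightarrow> (u, v) \<in> (adj_rel T)\<^sup>*"
  by (simp add: test_graph_def connected_graph_def)

locale glued_test_graphs =
  fixes T1 :: "('v1, 'e1, 'a::ring_1) tgraph" and T2 :: "('v2, 'e2, 'a) tgraph"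
    and v1 :: 'v1 and v2 :: 'v2
  assumes test_graph_T1: "test_graph T1" and test_graph_T2: "test_graph T2"
    and two_edge_connected_T2: "two_edge_connected T2"
    and v1_in: "v1 \<in> tverts T1" and v2_in: "v2 \<in> tverts T2"
begin

sublocale glued_vertex_sets "tverts T1" "tverts T2" v1 v2
  using v1_in v2_in by unfold_locales

abbreviation "G \<equiv> glue T1 v1 T2 v2"
abbreviation "g2 \<equiv> glue_vertex v1 v2"

lemma verts_glue: "tverts G = Inl ` tverts T1 \<union> g2 ` tverts T2"
proof -
  have "g2 ` tverts T2 = insert (Inl v1) (Inr ` (tverts T2 - {v2}))"
    using v2_in by (auto simp: glue_vertex_def image_iff)
  then show ?thesis using v1_in by (auto simp: glue_def)
qed

lemma finite_verts_glue: "finite (tverts G)"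
  using test_graph_T1 test_graph_T2 by (simp add: verts_glue test_graph_def wf_graph_def)

context
  fixes P assumes P: "partition_on (tverts G) P"
begin

abbreviation "Q \<equiv> quot_graph G P"
abbreviation "A \<equiv> Inl ` tedges T1 :: ('e1 + 'e2) set"
abbreviation "B \<equiv> Inr ` tedges T2 :: ('e1 + 'e2) set"
abbreviation "WA \<equiv> block_of P ` Inl ` tverts T1"
abbreviation "WB \<equiv> block_of P ` g2 ` tverts T2"
abbreviation "c \<equiv> block_of P (Inl v1)"

lemma c_in: "c \<in> WA" "c \<in> WB"
  using v1_in v2_in by (auto intro!: image_eqI[where x = v2])

lemma ends_A: "\<forall>e\<in>A. tsrc Q e \<in> WA \<and> ttgt Q e \<in> WA"
  using test_graph_ends[OF test_graph_T1] by (auto simp: quot_graph_glue_simps)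

lemma ends_B: "\<forall>e\<in>B. tsrc Q e \<in> WB \<and> ttgt Q e \<in> WB"
  using test_graph_ends[OF test_graph_T2] by (auto simp: quot_graph_glue_simps)

lemma rtrancl_A: "\<forall>x\<in>WA. \<forall>y\<in>WA. (x, y) \<in> (adj_via Q A)\<^sup>*"
  using rtrancl_adj_rel_map[OF test_graph_rtrancl[OF test_graph_T1], of _ _ Inl A Q
      "\<lambda>u. block_of P (Inl u)"]
  by (auto simp: quot_graph_glue_simps)

lemma rtrancl_B: "\<forall>x\<in>WB. \<forall>y\<in>WB. (x, y) \<in> (adj_via Q B)\<^sup>*"
  using rtrancl_adj_rel_map[OF test_graph_rtrancl[OF test_graph_T2], of _ _ Inr B Q
      "\<lambda>w. block_of P (g2 w)"]
  by (auto simp: quot_graph_glue_simps)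

lemma rtrancl_B_minus_edge: "\<forall>f\<in>B. (ttgt Q f, tsrc Q f) \<in> (adj_via Q (B - {f}))\<^sup>*"
proof
  fix f assume "f \<in> B"
  then obtain f' where f': "f' \<in> tedges T2" "f = Inr f'" by auto
  have "connected_graph (delete_edge T2 f')"
    using two_edge_connected_T2 f' by (simp add: two_edge_connected_def)
  then have "(ttgt T2 f', tsrc T2 f') \<in> (adj_rel (delete_edge T2 f'))\<^sup>*"
    using test_graph_ends[OF test_graph_T2 f'(1)] by (simp add: connected_graph_def delete_edge_def)
  from rtrancl_adj_rel_map[OF this, of Inr "B - {f}" Q "\<lambda>w. block_of P (g2 w)"]
  show "(ttgt Q f, tsrc Q f) \<in> (adj_via Q (B - {f}))\<^sup>*"
    using f' by (auto simp: quot_graph_glue_simps delete_edge_def)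
qed

text \<open>A block meeting both T1 and T2 away from the glued vertex is a second vertex shared by
  the images of T1 and of the two-edge-connected T2.\<close>
lemma tau0_not_side_preserving:
  assumes "\<not> side_preserving v1 P"
  shows "tau0 \<kappa> Q = 0"
proof -
  obtain X z1 z2 where X: "X \<in> P" "Inl v1 \<notin> X"
    "z1 \<in> X" "z1 \<notin> range Inr" "z2 \<in> X" "z2 \<notin> range Inl"
    using assms unfolding side_preserving_def by blast
  obtain u w where u: "z1 = Inl u" and w: "z2 = Inr w" using X by (cases z1; cases z2) auto
  have "X \<subseteq> tverts G" using P X partition_onD1 by blast
  then have "u \<in> tverts T1" "w \<in> tverts T2" "w \<noteq> v2" using X u w by (auto simp: glue_def)
  moreover have "X = block_of P (Inl u)" "X = block_of P (g2 w)"
    using block_of_eq[OF P X(1)] X u w \<open>w \<noteq> v2\<close> by auto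
  ultimately have "X \<in> WA" "X \<in> WB" by blast+
  moreover have "X \<noteq> c" using block_of_in(2)[OF P] v1_in X(2) verts_glue by blast
  ultimately have "\<not> cactus Q"
    using two_shared_vertices_not_cactus[of A B Q WB X c] rtrancl_A c_in
      ends_B rtrancl_B rtrancl_B_minus_edge
    by (auto simp: quot_graph_glue_simps)
  then show ?thesis by (simp add: tau0_def oriented_cactus_def)
qed

lemma side_preserving_sides_meet:
  assumes "side_preserving v1 P"
  shows "WA \<inter> WB = {c}"
proof (intro equalityI subsetI)
  fix X assume "X \<in> WA \<inter> WB"
  then obtain u w where u: "u \<in> tverts T1" "X = block_of P (Inl u)"
    and w: "w \<in> tverts T2" "X = block_of P (g2 w)" by auto
  have X: "X \<in> P" "Inl u \<in> X" "g2 w \<in> X"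
    using block_of_in[OF P] u w verts_glue by auto
  have "Inl v1 \<in> X"
  proof (cases "w = v2")
    case False
    then show ?thesis using X assms unfolding side_preserving_def by fastforce
  qed (use X in simp)
  then show "X \<in> {c}" using block_of_eq[OF P X(1)] by simp
qed (use c_in in auto)

lemma cut_vertex_split:
  assumes "side_preserving v1 P"
  shows "cut_vertex_split Q A B WA WB c"
proof
  show "tverts Q = WA \<union> WB"
  proof (intro equalityI subsetI)
    fix X assume "X \<in> tverts Q"
    then have "X \<in> P" by (simp add: quot_graph_glue_simps)
    moreover obtain z where "z \<in> X" using partition_onD3[OF P] \<open>X \<in> P\<close> by (metis ex_in_conv)
    moreover have "z \<in> Inl ` tverts T1 \<union> g2 ` tverts T2"
      using P \<open>X \<in> P\<close> \<open>z \<in> X\<close> partition_onD1 verts_glue by blast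
    ultimately show "X \<in> WA \<union> WB" using block_of_eq[OF P \<open>X \<in> P\<close> \<open>z \<in> X\<close>] by auto
  qed (use block_of_in(1)[OF P] verts_glue in \<open>auto simp: quot_graph_glue_simps\<close>)
  show "connected_graph (Q\<lparr>tverts := WA, tedges := A\<rparr>)"
    "connected_graph (Q\<lparr>tverts := WB, tedges := B\<rparr>)"
    using rtrancl_A rtrancl_B c_in unfolding connected_graph_def adj_rel_restrict by auto
qed (use ends_A ends_B side_preserving_sides_meet[OF assms] in \<open>auto simp: quot_graph_glue_simps\<close>)

lemma quot_iso_T1:
  "graph_iso (quot_graph T1 (partition_pullback (tverts T1) Inl P)) (Q\<lparr>tverts := WA, tedges := A\<rparr>)
     (\<lambda>X. block_of P (Inl (SOME u. u \<in> X))) Inl"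
  using test_graph_ends[OF test_graph_T1] verts_glue
  by (intro quot_graph_pullback_iso[OF P]) (auto simp: quot_graph_glue_simps)

lemma quot_iso_T2:
  "graph_iso (quot_graph T2 (partition_pullback (tverts T2) g2 P)) (Q\<lparr>tverts := WB, tedges := B\<rparr>)
     (\<lambda>X. block_of P (g2 (SOME u. u \<in> X))) Inr"
  using test_graph_ends[OF test_graph_T2] verts_glue
  by (intro quot_graph_pullback_iso[OF P]) (auto simp: quot_graph_glue_simps)

lemma tau0_side_preserving:
  assumes "unital_tracial_functional sc \<phi>" "free_cumulants \<phi> \<kappa>" "side_preserving v1 P"
  shows "tau0 \<kappa> Q = tau0 \<kappa> (quot_graph T1 (partition_pullback (tverts T1) Inl P)) *
                     tau0 \<kappa> (quot_graph T2 (partition_pullback (tverts T2) g2 P))"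
proof -
  interpret cut_vertex_split Q A B WA WB c by (rule cut_vertex_split[OF assms(3)])
  have "finite (tedges Q)"
    using test_graph_T1 test_graph_T2 by (simp add: quot_graph_glue_simps test_graph_def wf_graph_def)
  then show ?thesis
    using tau0_split tau0_graph_iso[OF assms(1,2) quot_iso_T1] tau0_graph_iso[OF assms(1,2) quot_iso_T2]
    by simp
qed

end

end

lemma (in glued_test_graphs) tau_glue_side_preserving:
  "tau \<kappa> G = (\<Sum>P | partition_on (tverts G) P \<and> side_preserving v1 P. tau0 \<kappa> (quot_graph G P))"
  unfolding tau_def
proof (rule sum.mono_neutral_right)
  show "finite {P. partition_on (tverts G) P}"
    by (rule finitely_many_partition_on[OF finite_verts_glue])
  show "\<forall>P\<in>{P. partition_on (tverts G) P} - {P. partition_on (tverts G) P \<and> side_preserving v1 P}.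
      tau0 \<kappa> (quot_graph G P) = 0"
    using tau0_not_side_preserving by blast
qed auto

theorem lemma2p12:
  fixes sc :: "complex \<Rightarrow> 'a::ring_1 \<Rightarrow> 'a"
    and \<phi> :: "'a \<Rightarrow> complex"
    and \<kappa> :: "'a list \<Rightarrow> complex"
    and T1 :: "('v1, 'e1, 'a) tgraph" and T2 :: "('v2, 'e2, 'a) tgraph"
    and v1 :: 'v1 and v2 :: 'v2
  assumes "complex_algebra sc"
    and "unital_tracial_functional sc \<phi>"
    and "free_cumulants \<phi> \<kappa>"
    and "test_graph T1" and "test_graph T2"
    and "two_edge_connected T2"
    and "v1 \<in> tverts T1" and "v2 \<in> tverts T2"
  shows "tau \<kappa> (glue T1 v1 T2 v2) = tau \<kappa> T1 * tau \<kappa> T2"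
proof -
  interpret glued_test_graphs T1 T2 v1 v2 using assms(4-8) by unfold_locales
  let ?pb1 = "partition_pullback (tverts T1) Inl" and ?pb2 = "partition_pullback (tverts T2) g2"
  let ?F = "\<lambda>(P1, P2). tau0 \<kappa> (quot_graph T1 P1) * tau0 \<kappa> (quot_graph T2 P2)"
  have verts: "tverts G = Inl ` tverts T1 \<union> Inr ` (tverts T2 - {v2})" by (simp add: glue_def)
  have "tau \<kappa> G = (\<Sum>P | partition_on (tverts G) P \<and> side_preserving v1 P. ?F (?pb1 P, ?pb2 P))"
    unfolding tau_glue_side_preserving
    using tau0_side_preserving[OF _ assms(2,3)] by (intro sum.cong) auto
  also have "\<dots> = (\<Sum>Q\<in>{P1. partition_on (tverts T1) P1} \<times> {P2. partition_on (tverts T2) P2}. ?F Q)"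
    using sum.reindex_bij_betw[OF bij_betw_pullbacks, of ?F] unfolding verts by simp
  also have "\<dots> = tau \<kappa> T1 * tau \<kappa> T2"
    unfolding tau_def sum_product sum.cartesian_product by simp
  finally show ?thesis .
qed

end
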